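(* Let $f\in\mathcal A_C$, $n\in\mathbb N$, and let $g:\mathbb R\to\mathbb R$ be such that the pointwise derivatives $g^{(k)}$ exist at every point of $\mathbb R$ and $g^{(k)}\in AC(\overline{\mathbb R})$ for each $0\le k\le n$. Then $f*g\in C^n(\mathbb R)$ and $(f*g)^{(n)}(x)=f*g^{(n)}(x)$ for every $x\in\mathbb R$.
   Context: $AC(\overline{\mathbb R})$ denotes the functions on $\mathbb R$ that are absolutely continuous on each compact interval and of bounded variation on $\mathbb R$. $C^0(\overline{\mathbb R})$: continuous $F:\mathbb R\to\mathbb R$ with finite limits $F(\pm\infty)$; $\mathcal B_C=\{F\in C^0(\overline{\mathbb R}):F(-\infty)=0\}$; $\mathcal A_C=\{f\in\mathcal D'(\mathbb R): f=F'\text{ (distributional derivative) for some } F\in\mathcal B_C\}$, the primitive being unique. For $h\in\mathcal A_C$ with primitive $H$ and $g$ of bounded variation, $\int_{-\infty}^\infty hg=H(\infty)g(\infty)-\int_{-\infty}^\infty H\,dg$ (Henstock–Stieltjes). For $f\in\mathcal A_C$ with primitive $F$, $f(x-\cdot)$ is the element of $\mathcal A_C$ with primitive $y\mapsto F(\infty)-F(x-y)$, and for $g$ of bounded variation $f*g(x)=\int_{-\infty}^\infty f(x-y)g(y)\,dy$ is the product integral of $f(x-\cdot)$ and $g$. *)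

theory Defs
  imports "HOL-Analysis.Analysis"
begin

definition abs_cont_on :: "(real \<Rightarrow> real) \<Rightarrow> real \<Rightarrow> real \<Rightarrow> bool" where
  "abs_cont_on g a b \<longleftrightarrow>
     (\<forall>e>0. \<exists>d>0. \<forall>D S. D division_of S \<and> S \<subseteq> {a..b} \<and> (\<Sum>K\<in>D. Sup K - Inf K) < d
        \<longrightarrow> (\<Sum>K\<in>D. \<bar>g (Sup K) - g (Inf K)\<bar>) < e)"

definition bounded_variation_R :: "(real \<Rightarrow> real) \<Rightarrow> bool" where
  "bounded_variation_R g \<longleftrightarrow>
     (\<exists>M. \<forall>D S. D division_of S \<longrightarrow> (\<Sum>K\<in>D. \<bar>g (Sup K) - g (Inf K)\<bar>) \<le> M)"

definition AC_bar :: "(real \<Rightarrow> real) \<Rightarrow> bool" where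
  "AC_bar g \<longleftrightarrow> (\<forall>a b. abs_cont_on g a b) \<and> bounded_variation_R g"

(* B_C: continuous F with finite limits at +-infinity and F(-infinity) = 0.
   An element f of A_C is represented by its (unique) primitive F in B_C. *)
definition B_C :: "(real \<Rightarrow> real) \<Rightarrow> bool" where
  "B_C F \<longleftrightarrow> continuous_on UNIV F \<and> (F \<longlongrightarrow> 0) at_bot \<and> (\<exists>L. (F \<longlongrightarrow> L) at_top)"

definition lim_top :: "(real \<Rightarrow> real) \<Rightarrow> real" where
  "lim_top F = Lim at_top F"

definition hs_has_integral :: "(real \<Rightarrow> real) \<Rightarrow> (real \<Rightarrow> real) \<Rightarrow> real \<Rightarrow> real set \<Rightarrow> bool" where
  "hs_has_integral H g I S \<longleftrightarrow>
     (\<forall>e>0. \<exists>\<gamma>. gauge \<gamma> \<and>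
        (\<forall>p. p tagged_division_of S \<and> \<gamma> fine p \<longrightarrow>
           \<bar>(\<Sum>(t,K)\<in>p. H t * (g (Sup K) - g (Inf K))) - I\<bar> < e))"

definition hs_integral :: "(real \<Rightarrow> real) \<Rightarrow> (real \<Rightarrow> real) \<Rightarrow> real \<Rightarrow> real \<Rightarrow> real" where
  "hs_integral H g a b = (THE I. hs_has_integral H g I {a..b})"

(* Henstock-Stieltjes integral over the real line, as the limit over [a,b],
   a -> -infinity, b -> +infinity (Hake's theorem) *)
definition hs_integral_R :: "(real \<Rightarrow> real) \<Rightarrow> (real \<Rightarrow> real) \<Rightarrow> real" where
  "hs_integral_R H g = Lim (at_bot \<times>\<^sub>F at_top) (\<lambda>(a,b). hs_integral H g a b)"

(* f*g(x) for f in A_C with primitive F and g of bounded variation: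
   the product integral of f(x-.) (primitive y |-> F(inf) - F(x-y)) and g, i.e.
   H(inf) g(inf) - int H dg  with H(y) = F(inf) - F(x-y), H(inf) = F(inf). *)
definition conv :: "(real \<Rightarrow> real) \<Rightarrow> (real \<Rightarrow> real) \<Rightarrow> real \<Rightarrow> real" where
  "conv F g x = lim_top F * lim_top g - hs_integral_R (\<lambda>y. lim_top F - F (x - y)) g"

end

theory Submission
  imports Defs
begin

text \<open>
  Write \<open>H\<^sub>x y = F(\<infinity>) - F(x - y)\<close> (\<open>reflected_primitive F x\<close> below), so that
  \<open>f * g (x) = F(\<infinity>) g(\<infinity>) - \<integral> H\<^sub>x dg\<close>. This Riemann--Stieltjes integral over the line exists
  because \<open>H\<^sub>x\<close> is bounded and uniformly continuous and \<open>g\<close> has bounded variation, and it depends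
  continuously on \<open>x\<close> because \<open>x \<mapsto> H\<^sub>x\<close> is uniformly continuous in the sup norm. If moreover \<open>g\<close>
  is differentiable with \<open>g'\<close> of bounded variation, then on every \<open>[a, b]\<close> Fubini and integration
  by parts give
  \<open>\<integral>\<^sub>x\<^sub>0\<^sup>x (\<integral>\<^sub>a\<^sup>b H\<^sub>t dg') dt = \<integral>\<^sub>a\<^sup>b H\<^sub>x dg - \<integral>\<^sub>a\<^sup>b H\<^sub>x\<^sub>0 dg + \<Phi>(b) g'(b) - \<Phi>(a) g'(a)\<close>
  with \<open>\<Phi>\<close> bounded. Both \<open>g\<close> and \<open>g'\<close> converge at \<open>\<plusminus>\<infinity>\<close>, so the mean value theorem forces
  \<open>g'(\<plusminus>\<infinity>) = 0\<close>; the boundary terms vanish as \<open>a \<rightarrow> -\<infinity>\<close>, \<open>b \<rightarrow> \<infinity>\<close>, and \<open>f * g\<close> is a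
  primitive of \<open>x \<mapsto> -\<integral> H\<^sub>x dg' = f * g'(x)\<close>.
\<close>

hide_const (open) Polynomial.content

lemma cauchy_filter_tendsto:
  fixes f :: "'a \<Rightarrow> 'b::complete_space"
  assumes "F \<noteq> bot"
    and "\<And>e. e > 0 \<Longrightarrow> \<exists>P. eventually P F \<and> (\<forall>x y. P x \<longrightarrow> P y \<longrightarrow> dist (f x) (f y) < e)"
  obtains L where "(f \<longlongrightarrow> L) F"
proof -
  have "cauchy_filter (filtermap f F)"
    unfolding cauchy_filter_metric_filtermap using assms(2) by blast
  moreover have "filtermap f F \<noteq> bot"
    using assms(1) by (simp add: filtermap_bot_iff)
  ultimately obtain L where "filtermap f F \<le> nhds L"
    using cauchy_filter_complete_converges[OF _ complete_UNIV] by (auto simp: principal_UNIV)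
  then show ?thesis
    using that unfolding filterlim_def by blast
qed

section \<open>Riemann--Stieltjes sums\<close>

definition increment :: "(real \<Rightarrow> real) \<Rightarrow> real set \<Rightarrow> real" where
  "increment g K = (if K = {} then 0 else g (Sup K) - g (Inf K))"

lemma increment_atLeastAtMost: "increment g {u..v} = (if u \<le> v then g v - g u else 0)"
  by (auto simp: increment_def)

lemma increment_degenerate: "v \<le> u \<Longrightarrow> increment g {u..v} = 0"
  by (auto simp: increment_atLeastAtMost)

lemma operative_real_increment_Int:
  "operative_real (+) 0 (\<lambda>L. increment g ({u..v} \<inter> L))"
proof
  show "increment g ({u..v} \<inter> {a..b}) = 0" if "b \<le> a" for a b
    using that by (auto simp: Int_atLeastAtMost increment_atLeastAtMost)
  show "increment g ({u..v} \<inter> {a..c}) + increment g ({u..v} \<inter> {c..b}) = increment g ({u..v} \<inter> {a..b})"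
    if "a < c" "c < b" for a b c
    using that by (auto simp: Int_atLeastAtMost increment_atLeastAtMost max_def min_def)
qed

lemma sum_increment_Int_tagged_division:
  assumes "p tagged_division_of {a..b}" "{u..v} \<subseteq> {a..b}"
  shows "(\<Sum>(t,L)\<in>p. increment g ({u..v} \<inter> L)) = increment g {u..v}"
proof -
  interpret operative_real "(+)" 0 "\<lambda>L. increment g ({u..v} \<inter> L)"
    by (rule operative_real_increment_Int)
  have "(\<Sum>(t,L)\<in>p. increment g ({u..v} \<inter> L)) = increment g ({u..v} \<inter> {a..b})"
    using tagged_division[of p a b] assms(1) by (simp add: sum_def del: Int_atLeastAtMost)
  also have "{u..v} \<inter> {a..b} = {u..v}"
    using assms(2) by blast
  finally show ?thesis .
qed

definition rs_sum :: "(real \<Rightarrow> real) \<Rightarrow> (real \<Rightarrow> real) \<Rightarrow> (real \<times> real set) set \<Rightarrow> real" where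
  "rs_sum H g p = (\<Sum>(t,K)\<in>p. H t * increment g K)"

lemma rs_sum_fst_snd: "rs_sum H g p = (\<Sum>x\<in>p. H (fst x) * increment g (snd x))"
  by (simp add: rs_sum_def split_def)

lemma hs_has_integral_iff_tendsto:
  "hs_has_integral H g I S \<longleftrightarrow> (rs_sum H g \<longlongrightarrow> I) (division_filter S)"
proof -
  have "(\<Sum>(t,K)\<in>p. H t * (g (Sup K) - g (Inf K))) = rs_sum H g p" if "p tagged_division_of S" for p
    unfolding rs_sum_def
  proof (intro sum.cong refl, clarify)
    fix t K assume "(t,K) \<in> p"
    then have "K \<noteq> {}"
      using tagged_division_ofD(2)[OF that] by blast
    then show "H t * (g (Sup K) - g (Inf K)) = H t * increment g K"
      by (simp add: increment_def)
  qed
  then show ?thesis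
    unfolding hs_has_integral_def tendsto_iff eventually_division_filter dist_real_def
    by (metis (no_types, lifting))
qed

lemma hs_has_integral_unique:
  "hs_has_integral H g I {a..b} \<Longrightarrow> hs_has_integral H g J {a..b} \<Longrightarrow> I = J"
  unfolding hs_has_integral_iff_tendsto
  by (metis tendsto_unique division_filter_not_empty box_real(2))

lemma hs_integral_eqI: "hs_has_integral H g I {a..b} \<Longrightarrow> hs_integral H g a b = I"
  unfolding hs_integral_def by (blast intro: the_equality hs_has_integral_unique)

lemma tagged_division_of_realE:
  fixes p :: "(real \<times> real set) set"
  assumes "p tagged_division_of S" "(t,K) \<in> p"
  obtains u v where "K = {u..v}" "u \<le> t" "t \<le> v" "K \<subseteq> S"
proof -
  obtain u v where "K = cbox u v"
    using tagged_division_ofD(4)[OF assms] by blast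
  moreover have "t \<in> K" "K \<subseteq> S"
    using tagged_division_ofD(2,3)[OF assms] by auto
  ultimately show ?thesis
    using that by auto
qed

lemma tagged_division_of_real_fineE:
  fixes p :: "(real \<times> real set) set"
  assumes "p tagged_division_of S" "(\<lambda>x. ball x d) fine p" "(t,K) \<in> p"
  obtains u v where "K = {u..v}" "u \<le> t" "t \<le> v" "K \<subseteq> S" "t - u < d" "v - t < d"
proof -
  obtain u v where uv: "K = {u..v}" "u \<le> t" "t \<le> v" "K \<subseteq> S"
    by (rule tagged_division_of_realE[OF assms(1,3)])
  have "u \<in> K" "v \<in> K"
    using uv by auto
  then have "dist t u < d" "dist t v < d"
    using fineD[OF assms(2,3)] by auto
  then show ?thesis
    using that uv by (auto simp: dist_real_def)
qed

lemma increment_Int_tagged_divisions_eq_0: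
  fixes p q :: "(real \<times> real set) set"
  assumes p: "p tagged_division_of S" and q: "q tagged_division_of T"
    and xy: "x1 \<in> p" "y1 \<in> q" "x2 \<in> p" "y2 \<in> q" "(x1, y1) \<noteq> (x2, y2)"
    and eq: "snd x1 \<inter> snd y1 = snd x2 \<inter> snd y2"
  shows "increment g (snd x1 \<inter> snd y1) = 0"
proof -
  have "interior (snd x1) \<inter> interior (snd x2) = {} \<or> interior (snd y1) \<inter> interior (snd y2) = {}"
    using xy tagged_division_ofD(5)[OF p, of "fst x1" "snd x1" "fst x2" "snd x2"]
      tagged_division_ofD(5)[OF q, of "fst y1" "snd y1" "fst y2" "snd y2"]
    by auto
  moreover have sub: "snd x1 \<inter> snd y1 \<subseteq> snd x1" "snd x1 \<inter> snd y1 \<subseteq> snd x2"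
      "snd x1 \<inter> snd y1 \<subseteq> snd y1" "snd x1 \<inter> snd y1 \<subseteq> snd y2"
    using eq by auto
  ultimately have "interior (snd x1 \<inter> snd y1) = {}"
    using interior_mono[OF sub(1)] interior_mono[OF sub(2)] interior_mono[OF sub(3)] interior_mono[OF sub(4)]
    by blast
  moreover obtain u1 v1 u2 v2 where "snd x1 = {u1..v1}" "snd y1 = {u2..v2}"
    using tagged_division_of_realE[OF p, of "fst x1" "snd x1"] tagged_division_of_realE[OF q, of "fst y1" "snd y1"] xy
    by (metis prod.collapse)
  ultimately show ?thesis
    by (simp add: increment_degenerate)
qed

lemma sum_increment_Int_tagged_divisions_le:
  assumes p: "p tagged_division_of {a..b}" and q: "q tagged_division_of {a..b}"
    and V: "\<And>D. D division_of {a..b} \<Longrightarrow> (\<Sum>K\<in>D. \<bar>increment g K\<bar>) \<le> V"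
  shows "(\<Sum>(x,y)\<in>p \<times> q. \<bar>increment g (snd x \<inter> snd y)\<bar>) \<le> V"
proof -
  define f :: "(real \<times> real set) \<times> (real \<times> real set) \<Rightarrow> real set"
    where "f = (\<lambda>(x,y). snd x \<inter> snd y)"
  define P where "P = {z \<in> p \<times> q. f z \<noteq> {}}"
  have fin: "finite (p \<times> q)"
    using p q by blast
  have "(\<Sum>(x,y)\<in>p \<times> q. \<bar>increment g (snd x \<inter> snd y)\<bar>) = (\<Sum>z\<in>P. \<bar>increment g (f z)\<bar>)"
    unfolding P_def f_def split_def
    by (rule sum.mono_neutral_right) (use fin in \<open>auto simp: increment_def\<close>)
  also have "\<dots> = (\<Sum>X\<in>f ` P. \<bar>increment g X\<bar>)"
  proof (rule sum.reindex_nontrivial[symmetric, unfolded o_def])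
    show "finite P"
      using fin by (simp add: P_def)
    fix z1 z2 assume z: "z1 \<in> P" "z2 \<in> P" "z1 \<noteq> z2" "f z1 = f z2"
    obtain x1 y1 x2 y2 where z12: "z1 = (x1,y1)" "z2 = (x2,y2)"
      by (cases z1, cases z2)
    with z have "x1 \<in> p" "y1 \<in> q" "x2 \<in> p" "y2 \<in> q" "(x1,y1) \<noteq> (x2,y2)"
        "snd x1 \<inter> snd y1 = snd x2 \<inter> snd y2"
      by (auto simp: P_def f_def)
    then have "increment g (snd x1 \<inter> snd y1) = 0"
      by (rule increment_Int_tagged_divisions_eq_0[OF p q])
    then show "\<bar>increment g (f z1)\<bar> = 0"
      using z12 by (simp add: f_def)
  qed
  also have "\<dots> \<le> V"
  proof (rule V)
    have "{k1 \<inter> k2 | k1 k2. k1 \<in> snd ` p \<and> k2 \<in> snd ` q \<and> k1 \<inter> k2 \<noteq> {}} division_of ({a..b} \<inter> {a..b})"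
      by (rule division_inter[OF division_of_tagged_division[OF p] division_of_tagged_division[OF q]])
    moreover have "{k1 \<inter> k2 | k1 k2. k1 \<in> snd ` p \<and> k2 \<in> snd ` q \<and> k1 \<inter> k2 \<noteq> {}} = f ` P"
    proof (intro equalityI subsetI)
      fix X assume "X \<in> {k1 \<inter> k2 | k1 k2. k1 \<in> snd ` p \<and> k2 \<in> snd ` q \<and> k1 \<inter> k2 \<noteq> {}}"
      then obtain x y where "x \<in> p" "y \<in> q" "X = snd x \<inter> snd y" "X \<noteq> {}"
        by blast
      then show "X \<in> f ` P"
        unfolding P_def f_def by (intro image_eqI[of _ _ "(x,y)"]) auto
    qed (auto simp: P_def f_def)
    ultimately show "f ` P division_of {a..b}"
      by simp
  qed
  finally show ?thesis .
qed

lemma rs_sum_eq_double_sum: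
  assumes p: "p tagged_division_of {a..b}" and q: "q tagged_division_of {a..b}"
  shows "rs_sum H g p = (\<Sum>x\<in>p. \<Sum>y\<in>q. H (fst x) * increment g (snd x \<inter> snd y))"
  unfolding rs_sum_fst_snd sum_distrib_left[symmetric]
proof (rule sum.cong[OF refl])
  fix x assume "x \<in> p"
  then obtain u v where "snd x = {u..v}" "snd x \<subseteq> {a..b}"
    using tagged_division_of_realE[OF p, of "fst x" "snd x"] by (metis prod.collapse)
  then show "H (fst x) * increment g (snd x) = H (fst x) * (\<Sum>y\<in>q. increment g (snd x \<inter> snd y))"
    using sum_increment_Int_tagged_division[OF q, of u v g] by (simp add: split_def)
qed

lemma abs_rs_sum_diff_le:
  assumes p: "p tagged_division_of {a..b}" and q: "q tagged_division_of {a..b}"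
    and H: "\<And>x y. x \<in> p \<Longrightarrow> y \<in> q \<Longrightarrow> snd x \<inter> snd y \<noteq> {} \<Longrightarrow> \<bar>H (fst x) - H (fst y)\<bar> \<le> e"
    and V: "\<And>D. D division_of {a..b} \<Longrightarrow> (\<Sum>K\<in>D. \<bar>increment g K\<bar>) \<le> V"
    and "e \<ge> 0"
  shows "\<bar>rs_sum H g p - rs_sum H g q\<bar> \<le> e * V"
proof -
  have "rs_sum H g p - rs_sum H g q = (\<Sum>x\<in>p. \<Sum>y\<in>q. (H (fst x) - H (fst y)) * increment g (snd x \<inter> snd y))"
    unfolding rs_sum_eq_double_sum[OF p q] rs_sum_eq_double_sum[OF q p] sum.swap[of _ q]
    by (simp add: Int_commute sum_subtractf[symmetric] left_diff_distrib)
  also have "\<bar>\<dots>\<bar> \<le> (\<Sum>x\<in>p. \<Sum>y\<in>q. e * \<bar>increment g (snd x \<inter> snd y)\<bar>)"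
  proof (intro order.trans[OF sum_abs] sum_mono order.trans[OF sum_abs])
    fix x y assume "x \<in> p" "y \<in> q"
    then show "\<bar>(H (fst x) - H (fst y)) * increment g (snd x \<inter> snd y)\<bar> \<le> e * \<bar>increment g (snd x \<inter> snd y)\<bar>"
      using H[of x y] by (cases "snd x \<inter> snd y = {}") (auto simp: increment_def abs_mult mult_right_mono)
  qed
  also have "\<dots> = e * (\<Sum>(x,y)\<in>p \<times> q. \<bar>increment g (snd x \<inter> snd y)\<bar>)"
    by (simp add: sum_distrib_left sum.cartesian_product split_def)
  also have "\<dots> \<le> e * V"
    by (intro mult_left_mono sum_increment_Int_tagged_divisions_le[OF p q V] \<open>e \<ge> 0\<close>)
  finally show ?thesis .
qed

lemma abs_rs_sum_diff_le_fine:
  assumes p: "p tagged_division_of {a..b}" "(\<lambda>x. ball x d) fine p"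
    and q: "q tagged_division_of {a..b}" "(\<lambda>x. ball x d) fine q"
    and H: "\<And>s t. s \<in> {a..b} \<Longrightarrow> t \<in> {a..b} \<Longrightarrow> \<bar>s - t\<bar> < 2 * d \<Longrightarrow> \<bar>H s - H t\<bar> \<le> e"
    and V: "\<And>D. D division_of {a..b} \<Longrightarrow> (\<Sum>K\<in>D. \<bar>increment g K\<bar>) \<le> V"
    and "e \<ge> 0"
  shows "\<bar>rs_sum H g p - rs_sum H g q\<bar> \<le> e * V"
proof (rule abs_rs_sum_diff_le[OF p(1) q(1) _ V \<open>e \<ge> 0\<close>])
  fix x y assume xy: "x \<in> p" "y \<in> q" "snd x \<inter> snd y \<noteq> {}"
  then obtain z where "z \<in> snd x" "z \<in> snd y"
    by blast
  then have "dist (fst x) z < d" "dist (fst y) z < d"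
    using fineD[OF p(2), of "fst x" "snd x"] fineD[OF q(2), of "fst y" "snd y"] xy by auto
  moreover have "fst x \<in> {a..b}" "fst y \<in> {a..b}"
    using tag_in_interval[OF p(1), of "fst x" "snd x"] tag_in_interval[OF q(1), of "fst y" "snd y"] xy by auto
  ultimately show "\<bar>H (fst x) - H (fst y)\<bar> \<le> e"
    by (intro H) (auto simp: dist_real_def)
qed

lemma abs_rs_sum_le:
  assumes p: "p tagged_division_of S"
    and H: "\<And>t. t \<in> S \<Longrightarrow> \<bar>H t\<bar> \<le> B" "B \<ge> 0"
    and V: "(\<Sum>K\<in>snd ` p. \<bar>increment g K\<bar>) \<le> V"
  shows "\<bar>rs_sum H g p\<bar> \<le> B * V"
proof -
  have "\<bar>rs_sum H g p\<bar> \<le> (\<Sum>(t,K)\<in>p. B * \<bar>increment g K\<bar>)"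
    unfolding rs_sum_def
    by (rule order.trans[OF sum_abs], rule sum_mono)
       (use H tag_in_interval[OF p] in \<open>auto simp: abs_mult mult_right_mono\<close>)
  also have "\<dots> = B * (\<Sum>K\<in>snd ` p. \<bar>increment g K\<bar>)"
    unfolding sum_distrib_left
    by (rule sum.over_tagged_division_lemma[OF p]) (simp add: increment_degenerate)
  also have "\<dots> \<le> B * V"
    by (rule mult_left_mono[OF V \<open>B \<ge> 0\<close>])
  finally show ?thesis .
qed

lemma variation_bound_nonneg:
  assumes "\<And>D. D division_of {a..b} \<Longrightarrow> (\<Sum>K\<in>D. \<bar>increment g K\<bar>) \<le> V"
  shows "V \<ge> 0"
proof -
  obtain D where D: "D division_of {a..b}"
    by (metis elementary_interval box_real(2))
  have "0 \<le> (\<Sum>K\<in>D. \<bar>increment g K\<bar>)"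
    by (simp add: sum_nonneg)
  also have "\<dots> \<le> V"
    by (rule assms[OF D])
  finally show ?thesis .
qed

lemma hs_has_integral_exists:
  assumes V: "\<And>D. D division_of {a..b} \<Longrightarrow> (\<Sum>K\<in>D. \<bar>increment g K\<bar>) \<le> V"
    and H: "uniformly_continuous_on {a..b} H"
  obtains I where "hs_has_integral H g I {a..b}"
proof -
  obtain I where "(rs_sum H g \<longlongrightarrow> I) (division_filter {a..b})"
  proof (rule cauchy_filter_tendsto)
    show "division_filter {a..b} \<noteq> bot"
      using division_filter_not_empty[of a b] by simp
    fix e :: real assume "e > 0"
    have "V \<ge> 0"
      by (rule variation_bound_nonneg[OF V])
    define e' where "e' = e / (V + 1)"
    have "e' > 0" "e' * V < e"
      using \<open>e > 0\<close> \<open>V \<ge> 0\<close> by (auto simp: e'_def field_simps)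
    then obtain \<delta> where \<delta>: "\<delta> > 0" "\<And>s t. s \<in> {a..b} \<Longrightarrow> t \<in> {a..b} \<Longrightarrow> dist s t < \<delta> \<Longrightarrow> dist (H s) (H t) < e'"
      using H unfolding uniformly_continuous_on_def by metis
    have H\<delta>: "\<bar>H s - H t\<bar> \<le> e'" if "s \<in> {a..b}" "t \<in> {a..b}" "\<bar>s - t\<bar> < 2 * (\<delta>/2)" for s t
      using \<delta>(2)[OF that(1,2)] that(3) by (simp add: dist_real_def)
    define P where "P p \<longleftrightarrow> p tagged_division_of {a..b} \<and> (\<lambda>x. ball x (\<delta>/2)) fine p" for p
    have "eventually P (division_filter {a..b})"
      unfolding P_def eventually_division_filter using \<delta>(1) by (intro exI[of _ "\<lambda>x. ball x (\<delta>/2)"]) auto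
    moreover have "dist (rs_sum H g p) (rs_sum H g q) < e" if "P p" "P q" for p q
    proof -
      have p: "p tagged_division_of {a..b}" "(\<lambda>x. ball x (\<delta>/2)) fine p"
        and q: "q tagged_division_of {a..b}" "(\<lambda>x. ball x (\<delta>/2)) fine q"
        using that by (simp_all add: P_def)
      have "\<bar>rs_sum H g p - rs_sum H g q\<bar> \<le> e' * V"
        by (rule abs_rs_sum_diff_le_fine[OF p q H\<delta> V less_imp_le[OF \<open>e' > 0\<close>]])
      then show ?thesis
        using \<open>e' * V < e\<close> by (simp add: dist_real_def)
    qed
    ultimately show "\<exists>P. eventually P (division_filter {a..b}) \<and>
        (\<forall>p q. P p \<longrightarrow> P q \<longrightarrow> dist (rs_sum H g p) (rs_sum H g q) < e)"
      by blast
  qed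
  then show ?thesis
    using that unfolding hs_has_integral_iff_tendsto by blast
qed

lemma abs_rs_sum_hs_integral_le:
  assumes I: "hs_has_integral H g I {a..b}"
    and V: "\<And>D. D division_of {a..b} \<Longrightarrow> (\<Sum>K\<in>D. \<bar>increment g K\<bar>) \<le> V"
    and p: "p tagged_division_of {a..b}" "(\<lambda>x. ball x d) fine p" and "d > 0"
    and H: "\<And>s t. s \<in> {a..b} \<Longrightarrow> t \<in> {a..b} \<Longrightarrow> \<bar>s - t\<bar> < 2 * d \<Longrightarrow> \<bar>H s - H t\<bar> \<le> e" and "e \<ge> 0"
  shows "\<bar>rs_sum H g p - I\<bar> \<le> e * V"
proof (rule tendsto_upperbound)
  show "((\<lambda>q. \<bar>rs_sum H g p - rs_sum H g q\<bar>) \<longlongrightarrow> \<bar>rs_sum H g p - I\<bar>) (division_filter {a..b})"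
    using I unfolding hs_has_integral_iff_tendsto by (intro tendsto_intros)
  show "eventually (\<lambda>q. \<bar>rs_sum H g p - rs_sum H g q\<bar> \<le> e * V) (division_filter {a..b})"
    unfolding eventually_division_filter
  proof (intro exI[of _ "\<lambda>x. ball x d"] conjI allI impI)
    show "gauge (\<lambda>x. ball x d)"
      using \<open>d > 0\<close> by (rule gauge_ball)
    fix q assume "q tagged_division_of {a..b} \<and> (\<lambda>x. ball x d) fine q"
    then show "\<bar>rs_sum H g p - rs_sum H g q\<bar> \<le> e * V"
      using H by (intro abs_rs_sum_diff_le_fine[OF p _ _ _ V \<open>e \<ge> 0\<close>]) simp_all
  qed
  show "division_filter {a..b} \<noteq> bot"
    using division_filter_not_empty[of a b] by simp
qed

section \<open>Bounded variation\<close>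

lemma division_of_atLeastAtMost: "u \<le> v \<Longrightarrow> {{u..v}} division_of {u..v :: real}"
  using division_of_self[of u v] by (simp add: box_real)

definition variation_le :: "(real \<Rightarrow> real) \<Rightarrow> real \<Rightarrow> bool" where
  "variation_le g M \<longleftrightarrow> (\<forall>D S. D division_of S \<longrightarrow> (\<Sum>K\<in>D. \<bar>increment g K\<bar>) \<le> M)"

lemma variation_leD: "variation_le g M \<Longrightarrow> D division_of S \<Longrightarrow> (\<Sum>K\<in>D. \<bar>increment g K\<bar>) \<le> M"
  unfolding variation_le_def by blast

lemma variation_le_nonneg: "variation_le g M \<Longrightarrow> M \<ge> 0"
  using variation_leD[of g M "{}" "{}"] by simp

lemma bounded_variation_R_iff: "bounded_variation_R g \<longleftrightarrow> (\<exists>M. variation_le g M)"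
proof -
  have "(\<Sum>K\<in>D. \<bar>g (Sup K) - g (Inf K)\<bar>) = (\<Sum>K\<in>D. \<bar>increment g K\<bar>)" if "D division_of S" for D S
    using division_ofD(3)[OF that] by (intro sum.cong) (auto simp: increment_def)
  then show ?thesis
    unfolding bounded_variation_R_def variation_le_def by metis
qed

lemma AC_bar_variation_le:
  assumes "AC_bar g"
  obtains M where "variation_le g M"
  using assms unfolding AC_bar_def bounded_variation_R_iff by blast

lemma AC_bar_isCont:
  assumes "AC_bar g"
  shows "isCont g x"
  unfolding continuous_at_eps_delta
proof (intro allI impI)
  fix e :: real assume "e > 0"
  then obtain d where d: "d > 0" "\<And>D S. D division_of S \<Longrightarrow> S \<subseteq> {x - 1..x + 1} \<Longrightarrow>
      (\<Sum>K\<in>D. Sup K - Inf K) < d \<Longrightarrow> (\<Sum>K\<in>D. \<bar>g (Sup K) - g (Inf K)\<bar>) < e"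
    using assms unfolding AC_bar_def abs_cont_on_def by meson
  show "\<exists>d>0. \<forall>y. dist y x < d \<longrightarrow> dist (g y) (g x) < e"
  proof (intro exI[of _ "min d 1"] conjI allI impI)
    fix y assume y: "dist y x < min d 1"
    define u v where "u = min x y" and "v = max x y"
    have "u \<le> v"
      by (simp add: u_def v_def)
    then have "(\<Sum>K\<in>{{u..v}}. \<bar>g (Sup K) - g (Inf K)\<bar>) < e"
      using y by (intro d(2)[OF division_of_atLeastAtMost]) (auto simp: u_def v_def dist_real_def)
    then show "dist (g y) (g x) < e"
      using \<open>u \<le> v\<close> by (cases "x \<le> y") (auto simp: u_def v_def dist_real_def abs_minus_commute)
  qed (use d in simp)
qed

lemma AC_bar_continuous_on: "AC_bar g \<Longrightarrow> continuous_on S g"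
  by (intro continuous_at_imp_continuous_on ballI AC_bar_isCont)

definition tail_variation_le :: "(real \<Rightarrow> real) \<Rightarrow> real \<Rightarrow> real \<Rightarrow> bool" where
  "tail_variation_le g e A \<longleftrightarrow> (\<forall>D S. D division_of S \<and> (\<forall>K\<in>D. K \<subseteq> {..-A} \<or> K \<subseteq> {A..})
      \<longrightarrow> (\<Sum>K\<in>D. \<bar>increment g K\<bar>) \<le> e)"

text \<open>A division carrying almost all of the variation lies in a bounded set; divisions in the
  complementary tails then carry at most the rest.\<close>

lemma variation_le_tail:
  assumes "variation_le g M" "e > 0"
  obtains A where "A > 0" "tail_variation_le g e A"
proof -
  define SS where "SS = {x. \<exists>D S. D division_of S \<and> x = (\<Sum>K\<in>D. \<bar>increment g K\<bar>)}"
  have ne: "SS \<noteq> {}"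
    unfolding SS_def using division_of_trivial by blast
  have bdd: "bdd_above SS"
    unfolding SS_def bdd_above_def using variation_leD[OF assms(1)] by blast
  obtain D0 S0 where D0: "D0 division_of S0" "Sup SS - e < (\<Sum>K\<in>D0. \<bar>increment g K\<bar>)"
    using less_cSup_iff[OF ne bdd, of "Sup SS - e"] \<open>e > 0\<close> unfolding SS_def by auto
  have "bounded S0"
    using division_ofD(1,4,6)[OF D0(1)] by (metis bounded_Union bounded_cbox)
  then obtain R where R: "\<And>x. x \<in> S0 \<Longrightarrow> \<bar>x\<bar> \<le> R"
    unfolding bounded_iff by auto
  show ?thesis
  proof (rule that[of "\<bar>R\<bar> + 1"])
    show "tail_variation_le g e (\<bar>R\<bar> + 1)"
      unfolding tail_variation_le_def
    proof (intro allI impI, elim conjE)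
      fix D S assume D: "D division_of S" and out: "\<forall>K\<in>D. K \<subseteq> {..-(\<bar>R\<bar> + 1)} \<or> K \<subseteq> {\<bar>R\<bar> + 1..}"
      have "S \<inter> S0 = {}"
      proof -
        have "\<bar>x\<bar> \<ge> \<bar>R\<bar> + 1" if "x \<in> S" for x
          using that out division_ofD(6)[OF D] by fastforce
        then show ?thesis
          using R by fastforce
      qed
      then have U: "(D \<union> D0) division_of (S \<union> S0)"
        using interior_subset by (intro division_disjoint_union[OF D D0(1)]) blast
      have "D \<inter> D0 = {}"
        using \<open>S \<inter> S0 = {}\<close> division_ofD(2,3)[OF D] division_ofD(2)[OF D0(1)] by blast
      then have "(\<Sum>K\<in>D \<union> D0. \<bar>increment g K\<bar>) = (\<Sum>K\<in>D. \<bar>increment g K\<bar>) + (\<Sum>K\<in>D0. \<bar>increment g K\<bar>)"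
        using division_ofD(1)[OF D] division_ofD(1)[OF D0(1)] by (rule sum.union_disjoint[rotated 2])
      moreover have "(\<Sum>K\<in>D \<union> D0. \<bar>increment g K\<bar>) \<le> Sup SS"
        by (rule cSup_upper[OF _ bdd]) (use U in \<open>auto simp: SS_def\<close>)
      ultimately show "(\<Sum>K\<in>D. \<bar>increment g K\<bar>) \<le> e"
        using D0(2) by linarith
    qed
  qed simp
qed

lemma tail_variation_le_abs_diff:
  assumes "tail_variation_le g e A" "(A \<le> x \<and> A \<le> y) \<or> (x \<le> -A \<and> y \<le> -A)"
  shows "\<bar>g x - g y\<bar> \<le> e"
proof -
  define u v where "u = min x y" and "v = max x y"
  have "u \<le> v"
    by (simp add: u_def v_def)
  then have "(\<Sum>K\<in>{{u..v}}. \<bar>increment g K\<bar>) \<le> e"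
    using assms(2)
    by (intro assms(1)[unfolded tail_variation_le_def, rule_format, of _ "{u..v}"])
       (auto simp: division_of_atLeastAtMost u_def v_def)
  then show ?thesis
    using \<open>u \<le> v\<close> by (cases "x \<le> y") (auto simp: u_def v_def increment_atLeastAtMost abs_minus_commute)
qed

lemma variation_le_tendsto_at_top:
  assumes "variation_le g M"
  obtains L where "(g \<longlongrightarrow> L) at_top"
proof (rule cauchy_filter_tendsto)
  fix e :: real assume "e > 0"
  then obtain A where "A > 0" "tail_variation_le g (e/2) A"
    using variation_le_tail[OF assms, of "e/2"] by auto
  then have "\<forall>x y. A \<le> x \<longrightarrow> A \<le> y \<longrightarrow> dist (g x) (g y) < e"
    using tail_variation_le_abs_diff \<open>e > 0\<close> by (fastforce simp: dist_real_def)
  then show "\<exists>P. eventually P at_top \<and> (\<forall>x y. P x \<longrightarrow> P y \<longrightarrow> dist (g x) (g y) < e)"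
    using eventually_ge_at_top by blast
qed simp

lemma variation_le_tendsto_at_bot:
  assumes "variation_le g M"
  obtains L where "(g \<longlongrightarrow> L) at_bot"
proof (rule cauchy_filter_tendsto)
  fix e :: real assume "e > 0"
  then obtain A where "A > 0" "tail_variation_le g (e/2) A"
    using variation_le_tail[OF assms, of "e/2"] by auto
  then have "\<forall>x y. x \<le> -A \<longrightarrow> y \<le> -A \<longrightarrow> dist (g x) (g y) < e"
    using tail_variation_le_abs_diff \<open>e > 0\<close> by (fastforce simp: dist_real_def)
  then show "\<exists>P. eventually P at_bot \<and> (\<forall>x y. P x \<longrightarrow> P y \<longrightarrow> dist (g x) (g y) < e)"
    using eventually_le_at_bot by blast
qed simp

section \<open>Integrals over the real line\<close>

lemma uniformly_continuous_on_subset: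
  fixes f :: "'a::metric_space \<Rightarrow> 'b::metric_space"
  assumes "uniformly_continuous_on S f" "T \<subseteq> S"
  shows "uniformly_continuous_on T f"
  unfolding uniformly_continuous_on_def
proof (intro allI impI)
  fix e :: real assume "e > 0"
  then obtain d where "d > 0" "\<forall>x\<in>S. \<forall>x'\<in>S. dist x' x < d \<longrightarrow> dist (f x') (f x) < e"
    using assms(1) unfolding uniformly_continuous_on_def by blast
  then show "\<exists>d>0. \<forall>x\<in>T. \<forall>x'\<in>T. dist x' x < d \<longrightarrow> dist (f x') (f x) < e"
    using assms(2) by (meson subsetD)
qed

lemma hs_has_integral_hs_integral:
  assumes "variation_le g M" "uniformly_continuous_on UNIV H"
  shows "hs_has_integral H g (hs_integral H g a b) {a..b}"
proof -
  obtain I where "hs_has_integral H g I {a..b}"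
    using hs_has_integral_exists[OF variation_leD[OF assms(1)] uniformly_continuous_on_subset[OF assms(2)]]
    by blast
  then show ?thesis
    by (simp add: hs_integral_eqI)
qed

lemma abs_rs_sum_hs_integral_le_uniform:
  assumes M: "variation_le g M" and H: "uniformly_continuous_on UNIV H" and "\<eta> > 0"
  obtains d where "d > 0"
    "\<And>a b p. p tagged_division_of {a..b} \<Longrightarrow> (\<lambda>x. ball x d) fine p \<Longrightarrow>
      \<bar>rs_sum H g p - hs_integral H g a b\<bar> \<le> \<eta>"
proof -
  define e where "e = \<eta> / (M + 1)"
  have "e > 0" "e * M \<le> \<eta>"
    using variation_le_nonneg[OF M] \<open>\<eta> > 0\<close> by (auto simp: e_def field_simps)
  then obtain \<delta> where "\<delta> > 0" and \<delta>: "\<forall>s\<in>UNIV. \<forall>t\<in>UNIV. dist t s < \<delta> \<longrightarrow> dist (H t) (H s) < e"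
    using H unfolding uniformly_continuous_on_def by blast
  have H\<delta>: "\<bar>H s - H t\<bar> \<le> e" if "\<bar>s - t\<bar> < 2 * (\<delta>/2)" for s t
    using \<delta> that by (simp add: dist_real_def abs_minus_commute less_imp_le)
  show ?thesis
  proof (rule that[of "\<delta>/2"])
    fix a b :: real and p :: "(real \<times> real set) set"
    assume p: "p tagged_division_of {a..b}" "(\<lambda>x. ball x (\<delta>/2)) fine p"
    have "\<bar>rs_sum H g p - hs_integral H g a b\<bar> \<le> e * M"
      by (rule abs_rs_sum_hs_integral_le[OF hs_has_integral_hs_integral[OF M H] variation_leD[OF M] p])
         (use \<open>\<delta> > 0\<close> \<open>e > 0\<close> H\<delta> in auto)
    then show "\<bar>rs_sum H g p - hs_integral H g a b\<bar> \<le> \<eta>"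
      using \<open>e * M \<le> \<eta>\<close> by linarith
  qed (use \<open>\<delta> > 0\<close> in simp)
qed

lemma rs_sum_Un:
  fixes p1 p2 :: "(real \<times> real set) set"
  assumes p1: "p1 tagged_division_of {a..c}" and p2: "p2 tagged_division_of {c..b}"
  shows "rs_sum H g (p1 \<union> p2) = rs_sum H g p1 + rs_sum H g p2"
proof -
  have "snd x = {c}" if "x \<in> p1 \<inter> p2" for x
    using that tagged_division_ofD(2,3)[OF p1, of "fst x" "snd x"] tagged_division_ofD(3)[OF p2, of "fst x" "snd x"]
    by fastforce
  then have "rs_sum H g (p1 \<inter> p2) = 0"
    unfolding rs_sum_fst_snd by (intro sum.neutral) (simp add: increment_def)
  moreover have "rs_sum H g (p1 \<union> p2) + rs_sum H g (p1 \<inter> p2) = rs_sum H g p1 + rs_sum H g p2"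
    unfolding rs_sum_def using p1 p2 by (intro sum.union_inter) auto
  ultimately show ?thesis
    by simp
qed

lemma hs_integral_combine:
  assumes M: "variation_le g M" and H: "uniformly_continuous_on UNIV H" and "a \<le> c" "c \<le> b"
  shows "hs_integral H g a b = hs_integral H g a c + hs_integral H g c b"
proof -
  have approx: "\<bar>hs_integral H g a b - (hs_integral H g a c + hs_integral H g c b)\<bar> \<le> 3 * \<eta>" if "\<eta> > 0" for \<eta>
  proof -
    obtain d where "d > 0" and d: "\<And>a b p. p tagged_division_of {a..b} \<Longrightarrow> (\<lambda>x. ball x d) fine p \<Longrightarrow>
        \<bar>rs_sum H g p - hs_integral H g a b\<bar> \<le> \<eta>"
      using abs_rs_sum_hs_integral_le_uniform[OF M H \<open>\<eta> > 0\<close>] by blast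
    obtain p1 where p1: "p1 tagged_division_of {a..c}" "(\<lambda>x. ball x d) fine p1"
      using fine_division_exists_real[OF gauge_ball[OF \<open>d > 0\<close>]] by blast
    obtain p2 where p2: "p2 tagged_division_of {c..b}" "(\<lambda>x. ball x d) fine p2"
      using fine_division_exists_real[OF gauge_ball[OF \<open>d > 0\<close>]] by blast
    have "{a..c} \<union> {c..b} = {a..b}"
      using assms(3,4) by auto
    then have "(p1 \<union> p2) tagged_division_of {a..b}"
      using tagged_division_Un[OF p1(1) p2(1)] by simp
    then have "\<bar>rs_sum H g (p1 \<union> p2) - hs_integral H g a b\<bar> \<le> \<eta>"
      using d fine_Un[OF p1(2) p2(2)] by blast
    then show ?thesis
      using d[OF p1] d[OF p2] rs_sum_Un[OF p1(1) p2(1), of H g] by linarith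
  qed
  have "\<bar>hs_integral H g a b - (hs_integral H g a c + hs_integral H g c b)\<bar> \<le> 0"
  proof (rule field_le_epsilon)
    fix e :: real assume "e > 0"
    then show "\<bar>hs_integral H g a b - (hs_integral H g a c + hs_integral H g c b)\<bar> \<le> 0 + e"
      using approx[of "e/3"] by simp
  qed
  then show ?thesis
    by simp
qed

lemma abs_hs_integral_tail_le:
  assumes M: "variation_le g M" and H: "uniformly_continuous_on UNIV H"
    and B: "\<And>t. \<bar>H t\<bar> \<le> B" and T: "tail_variation_le g e A"
    and uv: "{u..v} \<subseteq> {..-A} \<or> {u..v} \<subseteq> {A..}"
  shows "\<bar>hs_integral H g u v\<bar> \<le> B * e"
proof (rule field_le_epsilon)
  fix \<eta> :: real assume "\<eta> > 0"
  obtain d where "d > 0" and d: "\<And>a b p. p tagged_division_of {a..b} \<Longrightarrow> (\<lambda>x. ball x d) fine p \<Longrightarrow>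
      \<bar>rs_sum H g p - hs_integral H g a b\<bar> \<le> \<eta>"
    using abs_rs_sum_hs_integral_le_uniform[OF M H \<open>\<eta> > 0\<close>] by blast
  obtain p where p: "p tagged_division_of {u..v}" "(\<lambda>x. ball x d) fine p"
    using fine_division_exists_real[OF gauge_ball[OF \<open>d > 0\<close>]] by blast
  have "\<forall>K\<in>snd ` p. K \<subseteq> {..-A} \<or> K \<subseteq> {A..}"
    using uv division_ofD(2)[OF division_of_tagged_division[OF p(1)]] by blast
  then have V: "(\<Sum>K\<in>snd ` p. \<bar>increment g K\<bar>) \<le> e"
    using T division_of_tagged_division[OF p(1)] unfolding tail_variation_le_def by blast
  have "B \<ge> 0"
    using B[of 0] by linarith
  have "\<bar>rs_sum H g p\<bar> \<le> B * e"
    using B by (intro abs_rs_sum_le[OF p(1) _ \<open>B \<ge> 0\<close> V])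
  then show "\<bar>hs_integral H g u v\<bar> \<le> B * e + \<eta>"
    using d[OF p] by linarith
qed

lemma abs_hs_integral_diff_tails_le:
  assumes M: "variation_le g M" and H: "uniformly_continuous_on UNIV H"
    and B: "\<And>t. \<bar>H t\<bar> \<le> B" and T: "tail_variation_le g e A" and "A \<ge> 0"
    and "a1 \<le> -A" "a2 \<le> -A" "A \<le> b1" "A \<le> b2"
  shows "\<bar>hs_integral H g a1 b1 - hs_integral H g a2 b2\<bar> \<le> 4 * (B * e)"
proof -
  have core: "hs_integral H g a b = hs_integral H g a (-A) + hs_integral H g (-A) A + hs_integral H g A b"
    if "a \<le> -A" "A \<le> b" for a b
    using that \<open>A \<ge> 0\<close> hs_integral_combine[OF M H] by (metis neg_le_0_iff_le order_trans)
  have tail: "\<bar>hs_integral H g u v\<bar> \<le> B * e" if "v \<le> -A \<or> A \<le> u" for u v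
    using that by (intro abs_hs_integral_tail_le[OF M H B T]) auto
  show ?thesis
    using core[of a1 b1] core[of a2 b2] tail[where u=a1 and v="-A"] tail[where u=a2 and v="-A"]
      tail[where u=A and v=b1] tail[where u=A and v=b2] assms(6-9)
    by linarith
qed

lemma mult_divide_add_one_less:
  fixes c \<eta> :: real
  assumes "c \<ge> 0" "\<eta> > 0"
  shows "c * (\<eta> / (c + 1)) < \<eta>"
  using assms by (simp add: field_simps)

lemma divide_mult_add_one_mult_less:
  fixes M c e :: real
  assumes "M \<ge> 0" "c \<ge> 0" "e > 0"
  shows "e / ((M + 1) * (c + 1)) * M * c < e"
proof -
  have "e / ((M + 1) * (c + 1)) * M * c \<le> e / ((M + 1) * (c + 1)) * (M + 1) * c"
    using assms by (intro mult_right_mono mult_left_mono) auto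
  also have "\<dots> = c * (e / (c + 1))"
    using assms by simp
  also have "\<dots> < e"
    by (rule mult_divide_add_one_less[OF assms(2,3)])
  finally show ?thesis .
qed

lemma eventually_at_bot_at_top_tails:
  "eventually (\<lambda>(a,b). a \<le> -A \<and> A \<le> b) (at_bot \<times>\<^sub>F at_top :: (real \<times> real) filter)"
  unfolding eventually_prod_filter
  by (intro exI[of _ "\<lambda>a. a \<le> -A"] exI[of _ "\<lambda>b. A \<le> b"]) (simp add: eventually_le_at_bot eventually_ge_at_top)

lemma tendsto_hs_integral_R:
  assumes M: "variation_le g M" and H: "uniformly_continuous_on UNIV H" and B: "\<And>t. \<bar>H t\<bar> \<le> B"
  shows "((\<lambda>(a,b). hs_integral H g a b) \<longlongrightarrow> hs_integral_R H g) (at_bot \<times>\<^sub>F at_top)"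
proof -
  have "B \<ge> 0"
    using B[of 0] by linarith
  obtain L where L: "((\<lambda>(a,b). hs_integral H g a b) \<longlongrightarrow> L) (at_bot \<times>\<^sub>F at_top)"
  proof (rule cauchy_filter_tendsto)
    fix \<eta> :: real assume "\<eta> > 0"
    define e where "e = \<eta> / (4 * (B + 1))"
    have "e > 0"
      using \<open>\<eta> > 0\<close> \<open>B \<ge> 0\<close> by (simp add: e_def)
    have "4 * (B * e) = B * (\<eta> / (B + 1))"
      using \<open>B \<ge> 0\<close> by (simp add: e_def field_simps)
    then have "4 * (B * e) < \<eta>"
      using mult_divide_add_one_less[OF \<open>B \<ge> 0\<close> \<open>\<eta> > 0\<close>] by simp
    obtain A where "A > 0" "tail_variation_le g e A"
      using variation_le_tail[OF M \<open>e > 0\<close>] by blast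
    then have "dist (hs_integral H g a1 b1) (hs_integral H g a2 b2) < \<eta>"
      if "a1 \<le> -A \<and> A \<le> b1" "a2 \<le> -A \<and> A \<le> b2" for a1 b1 a2 b2
      using abs_hs_integral_diff_tails_le[OF M H B, of e A a1 a2 b1 b2] that \<open>4 * (B * e) < \<eta>\<close>
      by (simp add: dist_real_def)
    then show "\<exists>P. eventually P (at_bot \<times>\<^sub>F at_top) \<and>
        (\<forall>x y. P x \<longrightarrow> P y \<longrightarrow> dist ((\<lambda>(a,b). hs_integral H g a b) x) ((\<lambda>(a,b). hs_integral H g a b) y) < \<eta>)"
      using eventually_at_bot_at_top_tails[of A] by (intro exI[of _ "\<lambda>(a,b). a \<le> -A \<and> A \<le> b"]) auto
  qed (simp add: prod_filter_eq_bot)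
  moreover have "hs_integral_R H g = L"
    unfolding hs_integral_R_def by (rule tendsto_Lim[OF _ L]) (simp add: prod_filter_eq_bot)
  ultimately show ?thesis
    by simp
qed

lemma abs_hs_integral_hs_integral_R_le:
  assumes M: "variation_le g M" and H: "uniformly_continuous_on UNIV H" and B: "\<And>t. \<bar>H t\<bar> \<le> B"
    and T: "tail_variation_le g e A" "A \<ge> 0" and "a \<le> -A" "A \<le> b"
  shows "\<bar>hs_integral H g a b - hs_integral_R H g\<bar> \<le> 4 * (B * e)"
proof (rule tendsto_upperbound)
  show "((\<lambda>x. \<bar>hs_integral H g a b - (\<lambda>(a,b). hs_integral H g a b) x\<bar>) \<longlongrightarrow>
      \<bar>hs_integral H g a b - hs_integral_R H g\<bar>) (at_bot \<times>\<^sub>F at_top)"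
    by (intro tendsto_intros tendsto_hs_integral_R[OF M H B])
  show "eventually (\<lambda>x. \<bar>hs_integral H g a b - (\<lambda>(a,b). hs_integral H g a b) x\<bar> \<le> 4 * (B * e))
      (at_bot \<times>\<^sub>F at_top)"
    using eventually_at_bot_at_top_tails[of A]
    by eventually_elim (use abs_hs_integral_diff_tails_le[OF M H B T] assms(6,7) in auto)
qed (simp add: prod_filter_eq_bot)

lemma rs_sum_diff: "rs_sum H1 g p - rs_sum H2 g p = rs_sum (\<lambda>t. H1 t - H2 t) g p"
  unfolding rs_sum_def by (simp add: sum_subtractf[symmetric] left_diff_distrib split_def)

lemma abs_hs_integral_diff_le:
  assumes M: "variation_le g M" and H1: "uniformly_continuous_on UNIV H1" and H2: "uniformly_continuous_on UNIV H2"
    and D: "\<And>t. \<bar>H1 t - H2 t\<bar> \<le> \<eta>"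
  shows "\<bar>hs_integral H1 g a b - hs_integral H2 g a b\<bar> \<le> \<eta> * M"
proof (rule field_le_epsilon)
  fix e :: real assume "e > 0"
  obtain d1 where "d1 > 0" and d1: "\<And>a b p. p tagged_division_of {a..b} \<Longrightarrow> (\<lambda>x. ball x d1) fine p \<Longrightarrow>
      \<bar>rs_sum H1 g p - hs_integral H1 g a b\<bar> \<le> e/2"
    using abs_rs_sum_hs_integral_le_uniform[OF M H1 half_gt_zero[OF \<open>e > 0\<close>]] by blast
  obtain d2 where "d2 > 0" and d2: "\<And>a b p. p tagged_division_of {a..b} \<Longrightarrow> (\<lambda>x. ball x d2) fine p \<Longrightarrow>
      \<bar>rs_sum H2 g p - hs_integral H2 g a b\<bar> \<le> e/2"
    using abs_rs_sum_hs_integral_le_uniform[OF M H2 half_gt_zero[OF \<open>e > 0\<close>]] by blast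
  obtain p where p: "p tagged_division_of {a..b}" "(\<lambda>x. ball x d1 \<inter> ball x d2) fine p"
    using fine_division_exists_real[OF gauge_Int[OF gauge_ball[OF \<open>d1 > 0\<close>] gauge_ball[OF \<open>d2 > 0\<close>]]] by blast
  have "\<eta> \<ge> 0"
    using D[of 0] by linarith
  have "\<bar>rs_sum (\<lambda>t. H1 t - H2 t) g p\<bar> \<le> \<eta> * M"
    using D by (intro abs_rs_sum_le[OF p(1) _ \<open>\<eta> \<ge> 0\<close> variation_leD[OF M division_of_tagged_division[OF p(1)]]])
  moreover have "(\<lambda>x. ball x d1) fine p" "(\<lambda>x. ball x d2) fine p"
    using p(2) by (simp_all add: fine_Int)
  ultimately show "\<bar>hs_integral H1 g a b - hs_integral H2 g a b\<bar> \<le> \<eta> * M + e"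
    using d1[OF p(1)] d2[OF p(1)] unfolding rs_sum_diff[symmetric] by linarith
qed

lemma abs_hs_integral_R_diff_le:
  assumes M: "variation_le g M" and H1: "uniformly_continuous_on UNIV H1" and H2: "uniformly_continuous_on UNIV H2"
    and B1: "\<And>t. \<bar>H1 t\<bar> \<le> B1" and B2: "\<And>t. \<bar>H2 t\<bar> \<le> B2" and D: "\<And>t. \<bar>H1 t - H2 t\<bar> \<le> \<eta>"
  shows "\<bar>hs_integral_R H1 g - hs_integral_R H2 g\<bar> \<le> \<eta> * M"
proof (rule tendsto_upperbound)
  show "((\<lambda>x. \<bar>(\<lambda>(a,b). hs_integral H1 g a b) x - (\<lambda>(a,b). hs_integral H2 g a b) x\<bar>) \<longlongrightarrow>
      \<bar>hs_integral_R H1 g - hs_integral_R H2 g\<bar>) (at_bot \<times>\<^sub>F at_top)"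
    by (intro tendsto_intros tendsto_hs_integral_R[OF M H1 B1] tendsto_hs_integral_R[OF M H2 B2])
  show "eventually (\<lambda>x. \<bar>(\<lambda>(a,b). hs_integral H1 g a b) x - (\<lambda>(a,b). hs_integral H2 g a b) x\<bar> \<le> \<eta> * M)
      (at_bot \<times>\<^sub>F at_top)"
    by (rule always_eventually) (simp add: case_prod_unfold abs_hs_integral_diff_le[OF M H1 H2 D])
qed (simp add: prod_filter_eq_bot)

section \<open>Continuity of the convolution\<close>

lemma B_C_tails:
  assumes "B_C F" "e > 0"
  shows "\<exists>A\<ge>0. \<forall>x y. (A \<le> x \<and> A \<le> y) \<or> (x \<le> -A \<and> y \<le> -A) \<longrightarrow> \<bar>F x - F y\<bar> < e"
proof -
  obtain L where L: "(F \<longlongrightarrow> L) at_top" and L0: "(F \<longlongrightarrow> 0) at_bot"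
    using assms(1) unfolding B_C_def by blast
  have "eventually (\<lambda>x. dist (F x) L < e/2) at_top" "eventually (\<lambda>x. dist (F x) 0 < e/2) at_bot"
    using tendstoD[OF L half_gt_zero[OF assms(2)]] tendstoD[OF L0 half_gt_zero[OF assms(2)]] by auto
  then obtain A1 A2 where A1: "\<And>x. x \<ge> A1 \<Longrightarrow> \<bar>F x - L\<bar> < e/2" and A2: "\<And>x. x \<le> A2 \<Longrightarrow> \<bar>F x\<bar> < e/2"
    unfolding eventually_at_top_linorder eventually_at_bot_linorder dist_real_def by auto
  define A where "A = max (max A1 (-A2)) 0"
  have "\<bar>F x - F y\<bar> < e" if "(A \<le> x \<and> A \<le> y) \<or> (x \<le> -A \<and> y \<le> -A)" for x y
  proof -
    from that consider "A1 \<le> x" "A1 \<le> y" | "x \<le> A2" "y \<le> A2"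
      unfolding A_def by linarith
    then show ?thesis
      by cases (use A1[of x] A1[of y] A2[of x] A2[of y] in linarith)+
  qed
  then show ?thesis
    by (metis A_def max.cobounded2)
qed

lemma B_C_uniformly_continuous:
  assumes "B_C F"
  shows "uniformly_continuous_on UNIV F"
  unfolding uniformly_continuous_on_def
proof (intro allI impI)
  fix e :: real assume "e > 0"
  obtain A where A: "\<forall>x y. (A \<le> x \<and> A \<le> y) \<or> (x \<le> -A \<and> y \<le> -A) \<longrightarrow> \<bar>F x - F y\<bar> < e"
    using B_C_tails[OF assms \<open>e > 0\<close>] by blast
  have "continuous_on {-A-1..A+1} F"
    using assms unfolding B_C_def by (metis continuous_on_subset top_greatest)
  then have "uniformly_continuous_on {-A-1..A+1} F"
    by (rule compact_uniformly_continuous) simp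
  then obtain d where d: "d > 0" "\<forall>x\<in>{-A-1..A+1}. \<forall>y\<in>{-A-1..A+1}. dist y x < d \<longrightarrow> dist (F y) (F x) < e"
    unfolding uniformly_continuous_on_def using \<open>e > 0\<close> by blast
  have "dist (F y) (F x) < e" if "dist y x < min d 1" for x y
  proof (cases "x \<in> {-A-1..A+1} \<and> y \<in> {-A-1..A+1}")
    case True
    moreover have "dist y x < d"
      using that by simp
    ultimately show ?thesis
      using d(2) by blast
  next
    case False
    have "\<bar>y - x\<bar> < 1"
      using that by (simp add: dist_real_def)
    then have "(A \<le> x \<and> A \<le> y) \<or> (x \<le> -A \<and> y \<le> -A)"
      using False by (auto simp: abs_less_iff)
    then have "\<bar>F x - F y\<bar> < e"
      using A by blast
    then show ?thesis
      by (simp add: dist_real_def abs_minus_commute)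
  qed
  moreover have "min d 1 > 0"
    using d(1) by simp
  ultimately show "\<exists>d>0. \<forall>x\<in>UNIV. \<forall>y\<in>UNIV. dist y x < d \<longrightarrow> dist (F y) (F x) < e"
    by blast
qed

lemma B_C_bounded:
  assumes "B_C F"
  obtains B where "\<And>x. \<bar>F x\<bar> \<le> B"
proof -
  obtain A where A: "A \<ge> 0" "\<forall>x y. (A \<le> x \<and> A \<le> y) \<or> (x \<le> -A \<and> y \<le> -A) \<longrightarrow> \<bar>F x - F y\<bar> < 1"
    using B_C_tails[OF assms zero_less_one] by blast
  have "continuous_on {-A..A} F"
    using assms unfolding B_C_def by (metis continuous_on_subset top_greatest)
  then have "compact (F ` {-A..A})"
    by (rule compact_continuous_image) simp
  then obtain R where "\<forall>y\<in>F ` {-A..A}. norm y \<le> R"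
    using compact_imp_bounded bounded_iff by blast
  then have R: "\<And>x. x \<in> {-A..A} \<Longrightarrow> \<bar>F x\<bar> \<le> R"
    by auto
  have "\<bar>F x\<bar> \<le> R + 1" for x
  proof -
    consider "x \<in> {-A..A}" | "A \<le> x" | "x \<le> -A"
      by fastforce
    then show ?thesis
    proof cases
      case 2
      then show ?thesis using A(2)[rule_format, of x A] R[of A] \<open>A \<ge> 0\<close> by simp
    next
      case 3
      then show ?thesis using A(2)[rule_format, of x "-A"] R[of "-A"] \<open>A \<ge> 0\<close> by simp
    qed (use R in force)
  qed
  then show ?thesis
    using that by blast
qed

definition reflected_primitive :: "(real \<Rightarrow> real) \<Rightarrow> real \<Rightarrow> real \<Rightarrow> real" where
  "reflected_primitive F x = (\<lambda>y. lim_top F - F (x - y))"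

lemma conv_eq: "conv F g x = lim_top F * lim_top g - hs_integral_R (reflected_primitive F x) g"
  unfolding conv_def reflected_primitive_def ..

lemma reflected_primitive_bounded:
  assumes "B_C F"
  obtains B where "\<And>x y. \<bar>reflected_primitive F x y\<bar> \<le> B"
proof -
  obtain B where B: "\<And>x. \<bar>F x\<bar> \<le> B"
    using B_C_bounded[OF assms] by blast
  have "\<bar>reflected_primitive F x y\<bar> \<le> \<bar>lim_top F\<bar> + B" for x y
    using abs_triangle_ineq4[of "lim_top F" "F (x - y)"] B[of "x - y"]
    unfolding reflected_primitive_def by linarith
  then show ?thesis
    using that by blast
qed

lemma reflected_primitive_modulus:
  assumes "B_C F" "\<eta> > 0"
  obtains d where "d > 0"
    "\<And>x x' y y'. \<bar>(x - y) - (x' - y')\<bar> < d \<Longrightarrow> \<bar>reflected_primitive F x y - reflected_primitive F x' y'\<bar> \<le> \<eta>"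
proof -
  obtain d where "d > 0" and d: "\<forall>s\<in>UNIV. \<forall>t\<in>UNIV. dist t s < d \<longrightarrow> dist (F t) (F s) < \<eta>"
    using B_C_uniformly_continuous[OF assms(1)] \<open>\<eta> > 0\<close> unfolding uniformly_continuous_on_def by blast
  have "\<bar>reflected_primitive F x y - reflected_primitive F x' y'\<bar> \<le> \<eta>" if "\<bar>(x - y) - (x' - y')\<bar> < d" for x x' y y'
    using d that unfolding reflected_primitive_def by (simp add: dist_real_def abs_minus_commute less_imp_le)
  then show ?thesis
    using that \<open>d > 0\<close> by blast
qed

lemma uniformly_continuous_reflected_primitive:
  assumes "B_C F"
  shows "uniformly_continuous_on UNIV (reflected_primitive F x)"
  unfolding uniformly_continuous_on_def
proof (intro allI impI)
  fix e :: real assume "e > 0"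
  then obtain d where "d > 0" and d: "\<And>x x' y y'. \<bar>(x - y) - (x' - y')\<bar> < d \<Longrightarrow>
      \<bar>reflected_primitive F x y - reflected_primitive F x' y'\<bar> \<le> e/2"
    using reflected_primitive_modulus[OF assms, of "e/2"] by auto
  have "dist (reflected_primitive F x t) (reflected_primitive F x s) < e" if "dist t s < d" for s t
    using d[of x t x s] that \<open>e > 0\<close> by (simp add: dist_real_def abs_minus_commute)
  then show "\<exists>d>0. \<forall>s\<in>UNIV. \<forall>t\<in>UNIV. dist t s < d \<longrightarrow> dist (reflected_primitive F x t) (reflected_primitive F x s) < e"
    using \<open>d > 0\<close> by blast
qed

lemma uniformly_continuous_on_reflected_primitive_bound:
  assumes F: "B_C F" and M: "variation_le g M"
    and I: "\<And>x x' \<eta>. (\<And>t. \<bar>reflected_primitive F x t - reflected_primitive F x' t\<bar> \<le> \<eta>) \<Longrightarrow> \<bar>f x - f x'\<bar> \<le> \<eta> * M"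
  shows "uniformly_continuous_on UNIV f"
  unfolding uniformly_continuous_on_def
proof (intro allI impI)
  fix e :: real assume "e > 0"
  define \<eta> where "\<eta> = e / (M + 1)"
  have "\<eta> > 0" "\<eta> * M < e"
    using mult_divide_add_one_less[OF variation_le_nonneg[OF M] \<open>e > 0\<close>] variation_le_nonneg[OF M] \<open>e > 0\<close>
    by (simp_all add: \<eta>_def mult.commute)
  then obtain d where "d > 0" and d: "\<And>x x' y y'. \<bar>(x - y) - (x' - y')\<bar> < d \<Longrightarrow>
      \<bar>reflected_primitive F x y - reflected_primitive F x' y'\<bar> \<le> \<eta>"
    using reflected_primitive_modulus[OF F] by blast
  have "dist (f x) (f x') < e" if "dist x x' < d" for x x'
    using I[of x x' \<eta>] d[of x _ x'] that \<open>\<eta> * M < e\<close> by (force simp: dist_real_def)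
  then show "\<exists>d>0. \<forall>x\<in>UNIV. \<forall>x'\<in>UNIV. dist x' x < d \<longrightarrow> dist (f x') (f x) < e"
    using \<open>d > 0\<close> by blast
qed

lemma uniformly_continuous_hs_integral_reflected_primitive:
  assumes F: "B_C F" and M: "variation_le g M"
  shows "uniformly_continuous_on UNIV (\<lambda>x. hs_integral (reflected_primitive F x) g a b)"
  by (rule uniformly_continuous_on_reflected_primitive_bound[OF F M])
     (rule abs_hs_integral_diff_le[OF M uniformly_continuous_reflected_primitive[OF F]
        uniformly_continuous_reflected_primitive[OF F]])

lemma uniformly_continuous_hs_integral_R_reflected_primitive:
  assumes F: "B_C F" and M: "variation_le g M"
  shows "uniformly_continuous_on UNIV (\<lambda>x. hs_integral_R (reflected_primitive F x) g)"
proof -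
  obtain B where B: "\<And>x y. \<bar>reflected_primitive F x y\<bar> \<le> B"
    using reflected_primitive_bounded[OF F] by blast
  show ?thesis
    by (rule uniformly_continuous_on_reflected_primitive_bound[OF F M])
       (rule abs_hs_integral_R_diff_le[OF M uniformly_continuous_reflected_primitive[OF F]
          uniformly_continuous_reflected_primitive[OF F] B B])
qed

lemma continuous_on_conv:
  assumes "B_C F" "variation_le g M"
  shows "continuous_on UNIV (conv F g)"
  unfolding conv_eq[abs_def]
  using uniformly_continuous_imp_continuous[OF uniformly_continuous_hs_integral_R_reflected_primitive[OF assms]]
  by (intro continuous_intros)

section \<open>Differentiable integrators and integration by parts\<close>

lemma tendsto_tagged_sum_zero:
  fixes a b :: real
  assumes X: "\<And>\<eta>. \<eta> > 0 \<Longrightarrow> \<exists>\<delta>>0. \<forall>t u v. a \<le> u \<longrightarrow> u \<le> t \<longrightarrow> t \<le> v \<longrightarrow> v \<le> b \<longrightarrow>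
      t - u < \<delta> \<longrightarrow> v - t < \<delta> \<longrightarrow> \<bar>X t {u..v}\<bar> \<le> \<eta> * (v - u)"
  shows "((\<lambda>p. \<Sum>(t,K)\<in>p. X t K) \<longlongrightarrow> 0) (division_filter {a..b})"
proof (rule tendstoI)
  fix e :: real assume "e > 0"
  define \<eta> where "\<eta> = e / (\<bar>b - a\<bar> + 1)"
  have "\<bar>b - a\<bar> + 1 > 0"
    by simp
  then have "\<eta> > 0"
    using \<open>e > 0\<close> by (simp add: \<eta>_def)
  then obtain \<delta> where "\<delta> > 0" and \<delta>: "\<And>t u v. a \<le> u \<Longrightarrow> u \<le> t \<Longrightarrow> t \<le> v \<Longrightarrow> v \<le> b \<Longrightarrow>
      t - u < \<delta> \<Longrightarrow> v - t < \<delta> \<Longrightarrow> \<bar>X t {u..v}\<bar> \<le> \<eta> * (v - u)"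
    using X by blast
  have "\<bar>\<Sum>(t,K)\<in>p. X t K\<bar> < e" if p: "p tagged_division_of {a..b}" "(\<lambda>x. ball x \<delta>) fine p" for p
  proof -
    have "\<bar>\<Sum>(t,K)\<in>p. X t K\<bar> \<le> (\<Sum>(t,K)\<in>p. \<eta> * content K)"
    proof (rule order.trans[OF sum_abs sum_mono], clarify)
      fix t K assume "(t,K) \<in> p"
      then obtain u v where "K = {u..v}" "u \<le> t" "t \<le> v" "K \<subseteq> {a..b}" "t - u < \<delta>" "v - t < \<delta>"
        using tagged_division_of_real_fineE[OF p] by metis
      then show "\<bar>X t K\<bar> \<le> \<eta> * content K"
        using \<delta>[of u t v] by auto
    qed
    also have "\<dots> = \<eta> * content {a..b}"
      using additive_content_tagged_division[of p a b] p(1) by (simp add: sum_distrib_left[symmetric] split_def)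
    also have "\<dots> \<le> \<eta> * \<bar>b - a\<bar>"
      using \<open>\<eta> > 0\<close> by (intro mult_left_mono) auto
    also have "\<dots> < e"
      using mult_divide_add_one_less[OF abs_ge_zero \<open>e > 0\<close>, of "b - a"] by (simp add: \<eta>_def mult.commute)
    finally show ?thesis .
  qed
  then show "eventually (\<lambda>p. dist (\<Sum>(t,K)\<in>p. X t K) 0 < e) (division_filter {a..b})"
    unfolding eventually_division_filter using \<open>\<delta> > 0\<close> by (intro exI[of _ "\<lambda>x. ball x \<delta>"]) auto
qed

lemma abs_increment_sub_linear_le:
  assumes "u \<le> v" "\<And>y. y \<in> {u..v} \<Longrightarrow> (f has_real_derivative f' y) (at y)"
    and "\<And>y. y \<in> {u..v} \<Longrightarrow> \<bar>f' y - c\<bar> \<le> B"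
  shows "\<bar>f v - f u - (v - u) * c\<bar> \<le> B * (v - u)"
proof (cases "u = v")
  case False
  then obtain z where z: "u < z" "z < v" "f v - f u = (v - u) * f' z"
    using MVT2[of u v f f'] assms(1,2) by force
  have "\<bar>f v - f u - (v - u) * c\<bar> = (v - u) * \<bar>f' z - c\<bar>"
    using z by (simp add: abs_mult right_diff_distrib[symmetric])
  also have "\<dots> \<le> (v - u) * B"
    using assms(3)[of z] z by (intro mult_left_mono) auto
  finally show ?thesis
    by (simp add: mult.commute)
qed simp

lemma continuous_on_Icc_bounded:
  fixes f :: "real \<Rightarrow> real"
  assumes "continuous_on {a..b} f"
  obtains B where "B \<ge> 0" "\<And>x. x \<in> {a..b} \<Longrightarrow> \<bar>f x\<bar> \<le> B"
proof -
  have "bounded (f ` {a..b})"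
    by (rule compact_imp_bounded[OF compact_continuous_image[OF assms compact_Icc]])
  then obtain R where "\<forall>y\<in>f ` {a..b}. norm y \<le> R"
    unfolding bounded_iff by blast
  then show ?thesis
    using that[of "\<bar>R\<bar>"] by force
qed

lemma continuous_on_Icc_modulus:
  fixes f :: "real \<Rightarrow> real"
  assumes "continuous_on {a..b} f" "\<eta> > 0"
  obtains \<delta> where "\<delta> > 0" "\<And>x y. x \<in> {a..b} \<Longrightarrow> y \<in> {a..b} \<Longrightarrow> \<bar>x - y\<bar> < \<delta> \<Longrightarrow> \<bar>f x - f y\<bar> \<le> \<eta>"
proof -
  have "uniformly_continuous_on {a..b} f"
    by (rule compact_uniformly_continuous[OF assms(1) compact_Icc])
  then obtain \<delta> where "\<delta> > 0" "\<forall>x\<in>{a..b}. \<forall>y\<in>{a..b}. dist y x < \<delta> \<longrightarrow> dist (f y) (f x) < \<eta>"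
    unfolding uniformly_continuous_on_def using assms(2) by blast
  then show ?thesis
    using that by (fastforce simp: dist_real_def abs_minus_commute)
qed

text \<open>Each term of the Riemann--Stieltjes sum differs from the corresponding term of the Riemann
  sum of \<open>H * G\<close> by \<open>H t\<close> times the error of the mean value theorem on \<open>K\<close>.\<close>

lemma hs_has_integral_deriv_integrator:
  assumes g: "\<And>y. y \<in> {a..b} \<Longrightarrow> (g has_real_derivative G y) (at y)"
    and G: "continuous_on {a..b} G" and H: "continuous_on {a..b} H"
  shows "hs_has_integral H g (integral {a..b} (\<lambda>y. H y * G y)) {a..b}"
proof -
  have riemann: "((\<lambda>p. \<Sum>(t,K)\<in>p. content K * (H t * G t)) \<longlongrightarrow> integral {a..b} (\<lambda>y. H y * G y))
      (division_filter {a..b})"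
    using integrable_integral[OF integrable_continuous_real[OF continuous_on_mult[OF H G]]]
    by (simp add: has_integral_cbox[of _ _ a b, unfolded box_real(2)])
  obtain BH where "BH \<ge> 0" and BH: "\<And>y. y \<in> {a..b} \<Longrightarrow> \<bar>H y\<bar> \<le> BH"
    using continuous_on_Icc_bounded[OF H] by blast
  have "((\<lambda>p. \<Sum>(t,K)\<in>p. H t * increment g K - content K * (H t * G t)) \<longlongrightarrow> 0) (division_filter {a..b})"
  proof (rule tendsto_tagged_sum_zero)
    fix \<eta> :: real assume "\<eta> > 0"
    then obtain \<delta> where "\<delta> > 0" and \<delta>: "\<And>x y. x \<in> {a..b} \<Longrightarrow> y \<in> {a..b} \<Longrightarrow> \<bar>x - y\<bar> < \<delta> \<Longrightarrow>
        \<bar>G x - G y\<bar> \<le> \<eta> / (BH + 1)"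
      using continuous_on_Icc_modulus[OF G, of "\<eta> / (BH + 1)"] \<open>BH \<ge> 0\<close> by auto
    have "\<bar>H t * increment g {u..v} - content {u..v} * (H t * G t)\<bar> \<le> \<eta> * (v - u)"
      if "a \<le> u" "u \<le> t" "t \<le> v" "v \<le> b" "t - u < \<delta>" "v - t < \<delta>" for t u v
    proof -
      have "\<bar>g v - g u - (v - u) * G t\<bar> \<le> \<eta> / (BH + 1) * (v - u)"
        using that by (intro abs_increment_sub_linear_le[where f'=G] g \<delta>) auto
      moreover have "\<bar>H t\<bar> \<le> BH"
        using that BH by simp
      ultimately have "\<bar>H t\<bar> * \<bar>g v - g u - (v - u) * G t\<bar> \<le> BH * (\<eta> / (BH + 1) * (v - u))"
        by (intro mult_mono) auto
      also have "\<dots> \<le> \<eta> * (v - u)"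
        using \<open>BH \<ge> 0\<close> \<open>\<eta> > 0\<close> that by (simp add: field_simps)
      finally have "\<bar>H t\<bar> * \<bar>g v - g u - (v - u) * G t\<bar> \<le> \<eta> * (v - u)" .
      moreover have "H t * increment g {u..v} - content {u..v} * (H t * G t) = H t * (g v - g u - (v - u) * G t)"
        using that by (simp add: increment_atLeastAtMost algebra_simps)
      ultimately show ?thesis
        by (simp add: abs_mult)
    qed
    then show "\<exists>\<delta>>0. \<forall>t u v. a \<le> u \<longrightarrow> u \<le> t \<longrightarrow> t \<le> v \<longrightarrow> v \<le> b \<longrightarrow> t - u < \<delta> \<longrightarrow> v - t < \<delta> \<longrightarrow>
        \<bar>H t * increment g {u..v} - content {u..v} * (H t * G t)\<bar> \<le> \<eta> * (v - u)"
      using \<open>\<delta> > 0\<close> by blast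
  qed
  then have "((\<lambda>p. rs_sum H g p - (\<Sum>(t,K)\<in>p. content K * (H t * G t))) \<longlongrightarrow> 0) (division_filter {a..b})"
    unfolding rs_sum_def by (simp add: sum_subtractf split_def)
  then show ?thesis
    unfolding hs_has_integral_iff_tendsto by (rule Lim_transform[OF riemann])
qed

lemma abs_increment_product_sub_le:
  fixes P G p :: "real \<Rightarrow> real"
  assumes uv: "u \<le> t" "t \<le> v"
    and P: "\<And>y. y \<in> {u..v} \<Longrightarrow> (P has_real_derivative p y) (at y)"
    and p: "\<And>y. y \<in> {u..v} \<Longrightarrow> \<bar>p y\<bar> \<le> Bp" "\<And>y. y \<in> {u..v} \<Longrightarrow> \<bar>p y - p t\<bar> \<le> \<eta>"
    and G: "\<And>y. y \<in> {u..v} \<Longrightarrow> \<bar>G y - G t\<bar> \<le> \<eta>" "\<bar>G t\<bar> \<le> BG"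
  shows "\<bar>(P v * G v - P u * G u) - (P t * (G v - G u) + (v - u) * (G t * p t))\<bar> \<le> (Bp + BG) * \<eta> * (v - u)"
proof -
  have "Bp \<ge> 0" "BG \<ge> 0" "\<eta> \<ge> 0"
    using p(1)[of t] G(2) p(2)[of t] uv by auto
  have "\<bar>P v - P t\<bar> \<le> Bp * (v - t)" "\<bar>P t - P u\<bar> \<le> Bp * (t - u)"
    using uv abs_increment_sub_linear_le[of _ _ P p 0 Bp] P p(1) by auto
  moreover have "\<bar>G v - G t\<bar> \<le> \<eta>" "\<bar>G u - G t\<bar> \<le> \<eta>"
    using uv G(1)[of v] G(1)[of u] by auto
  moreover have "\<bar>P v - P u - (v - u) * p t\<bar> \<le> \<eta> * (v - u)"
    using uv by (intro abs_increment_sub_linear_le[where f'=p] P p(2)) auto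
  ultimately have "\<bar>(P v - P t) * (G v - G t)\<bar> \<le> Bp * (v - t) * \<eta>"
      "\<bar>(P u - P t) * (G u - G t)\<bar> \<le> Bp * (t - u) * \<eta>"
      "\<bar>G t * (P v - P u - (v - u) * p t)\<bar> \<le> BG * (\<eta> * (v - u))"
    unfolding abs_mult using \<open>Bp \<ge> 0\<close> \<open>BG \<ge> 0\<close> \<open>\<eta> \<ge> 0\<close> G(2)
    by (auto intro!: mult_mono simp: abs_minus_commute)
  moreover have "(P v * G v - P u * G u) - (P t * (G v - G u) + (v - u) * (G t * p t))
      = (P v - P t) * (G v - G t) - (P u - P t) * (G u - G t) + G t * (P v - P u - (v - u) * p t)"
    by (simp add: algebra_simps)
  ultimately show ?thesis
    by (simp add: algebra_simps)
qed

lemma hs_has_integral_by_parts: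
  assumes ab: "a \<le> b" and P: "\<And>y. y \<in> {a..b} \<Longrightarrow> (P has_real_derivative p y) (at y)"
    and p: "continuous_on {a..b} p" and G: "continuous_on {a..b} G"
  shows "hs_has_integral P G (P b * G b - P a * G a - integral {a..b} (\<lambda>y. G y * p y)) {a..b}"
proof -
  have riemann: "((\<lambda>q. \<Sum>(t,K)\<in>q. content K * (G t * p t)) \<longlongrightarrow> integral {a..b} (\<lambda>y. G y * p y))
      (division_filter {a..b})"
    using integrable_integral[OF integrable_continuous_real[OF continuous_on_mult[OF G p]]]
    by (simp add: has_integral_cbox[of _ _ a b, unfolded box_real(2)])
  define \<Delta> where "\<Delta> K = P (Sup K) * G (Sup K) - P (Inf K) * G (Inf K)" for K
  define R :: "(real \<times> real set) set \<Rightarrow> real" where "R q = (\<Sum>(t,K)\<in>q. content K * (G t * p t))" for q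
  have boundary: "(\<Sum>x\<in>q. \<Delta> (snd x)) = P b * G b - P a * G a" if "q tagged_division_of {a..b}" for q
    using additive_tagged_division_1[OF ab that, of "\<lambda>y. P y * G y"] by (simp add: \<Delta>_def split_def)
  obtain BG where "BG \<ge> 0" and BG: "\<And>y. y \<in> {a..b} \<Longrightarrow> \<bar>G y\<bar> \<le> BG"
    using continuous_on_Icc_bounded[OF G] by blast
  obtain Bp where "Bp \<ge> 0" and Bp: "\<And>y. y \<in> {a..b} \<Longrightarrow> \<bar>p y\<bar> \<le> Bp"
    using continuous_on_Icc_bounded[OF p] by blast
  have "((\<lambda>q. \<Sum>(t,K)\<in>q. \<Delta> K - (P t * increment G K + content K * (G t * p t))) \<longlongrightarrow> 0)
      (division_filter {a..b})"
  proof (rule tendsto_tagged_sum_zero)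
    fix \<eta> :: real assume "\<eta> > 0"
    define \<eta>' where "\<eta>' = \<eta> / (Bp + BG + 1)"
    have "\<eta>' > 0" "(Bp + BG) * \<eta>' \<le> \<eta>"
      using \<open>\<eta> > 0\<close> \<open>BG \<ge> 0\<close> \<open>Bp \<ge> 0\<close> by (auto simp: \<eta>'_def field_simps)
    obtain \<delta>1 where "\<delta>1 > 0" and \<delta>1: "\<And>x y. x \<in> {a..b} \<Longrightarrow> y \<in> {a..b} \<Longrightarrow> \<bar>x - y\<bar> < \<delta>1 \<Longrightarrow> \<bar>G x - G y\<bar> \<le> \<eta>'"
      using continuous_on_Icc_modulus[OF G \<open>\<eta>' > 0\<close>] by blast
    obtain \<delta>2 where "\<delta>2 > 0" and \<delta>2: "\<And>x y. x \<in> {a..b} \<Longrightarrow> y \<in> {a..b} \<Longrightarrow> \<bar>x - y\<bar> < \<delta>2 \<Longrightarrow> \<bar>p x - p y\<bar> \<le> \<eta>'"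
      using continuous_on_Icc_modulus[OF p \<open>\<eta>' > 0\<close>] by blast
    have "\<bar>(P v * G v - P u * G u) - (P t * increment G {u..v} + content {u..v} * (G t * p t))\<bar> \<le> \<eta> * (v - u)"
      if uv: "a \<le> u" "u \<le> t" "t \<le> v" "v \<le> b" "t - u < min \<delta>1 \<delta>2" "v - t < min \<delta>1 \<delta>2" for t u v
    proof -
      have "\<bar>(P v * G v - P u * G u) - (P t * (G v - G u) + (v - u) * (G t * p t))\<bar> \<le> (Bp + BG) * \<eta>' * (v - u)"
        using uv by (intro abs_increment_product_sub_le P Bp BG \<delta>1 \<delta>2) auto
      also have "\<dots> \<le> \<eta> * (v - u)"
        using \<open>(Bp + BG) * \<eta>' \<le> \<eta>\<close> uv by (intro mult_right_mono) auto
      finally show ?thesis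
        using uv by (simp add: increment_atLeastAtMost)
    qed
    then show "\<exists>\<delta>>0. \<forall>t u v. a \<le> u \<longrightarrow> u \<le> t \<longrightarrow> t \<le> v \<longrightarrow> v \<le> b \<longrightarrow> t - u < \<delta> \<longrightarrow> v - t < \<delta> \<longrightarrow>
        \<bar>\<Delta> {u..v} - (P t * increment G {u..v} + content {u..v} * (G t * p t))\<bar> \<le> \<eta> * (v - u)"
      using \<open>\<delta>1 > 0\<close> \<open>\<delta>2 > 0\<close> by (intro exI[of _ "min \<delta>1 \<delta>2"]) (auto simp: \<Delta>_def)
  qed
  then have "((\<lambda>q. (P b * G b - P a * G a) - rs_sum P G q - R q) \<longlongrightarrow> 0) (division_filter {a..b})"
    by (rule Lim_transform_eventually)
       (use eventually_division_filter_tagged_division[of "{a..b}"] in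
        \<open>eventually_elim, simp add: boundary[symmetric] rs_sum_def R_def sum_subtractf sum.distrib split_def\<close>)
  from tendsto_minus[OF this]
  have "((\<lambda>q. rs_sum P G q - ((P b * G b - P a * G a) - R q)) \<longlongrightarrow> 0) (division_filter {a..b})"
    by (simp add: algebra_simps)
  then show ?thesis
    unfolding hs_has_integral_iff_tendsto
    by (rule Lim_transform[OF tendsto_diff[OF tendsto_const riemann[folded R_def]]])
qed

section \<open>Differentiation of the convolution\<close>

lemma has_integral_bound_real:
  fixes f :: "real \<Rightarrow> real"
  assumes "0 \<le> B" "(f has_integral i) {a..b}" "\<And>x. x \<in> {a..b} \<Longrightarrow> \<bar>f x\<bar> \<le> B"
  shows "\<bar>i\<bar> \<le> B * content {a..b}"
  using has_integral_bound[of B f i a b] assms by (simp add: box_real)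

lemma continuous_on_reflected_primitive_fst:
  assumes "B_C F"
  shows "continuous_on S (\<lambda>t. reflected_primitive F t y)"
proof -
  have "continuous_on UNIV F"
    using assms unfolding B_C_def by blast
  then have "continuous_on S (\<lambda>t. F (t - y))"
    by (rule continuous_on_compose2) (auto intro: continuous_intros)
  then show ?thesis
    unfolding reflected_primitive_def by (intro continuous_intros)
qed

lemma has_integral_rs_sum:
  assumes "finite p" "\<And>y. ((\<lambda>t. h t y) has_integral \<Phi> y) S"
  shows "((\<lambda>t. rs_sum (h t) G p) has_integral rs_sum \<Phi> G p) S"
  unfolding rs_sum_fst_snd using assms by (intro has_integral_sum has_integral_mult_left) auto

lemma hs_has_integral_integral_reflected_primitive:
  assumes F: "B_C F" and M: "variation_le G M"
  shows "hs_has_integral (\<lambda>y. integral {a0..u} (\<lambda>t. reflected_primitive F t y)) G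
      (integral {a0..u} (\<lambda>t. hs_integral (reflected_primitive F t) G a b)) {a..b}"
  unfolding hs_has_integral_iff_tendsto
proof (rule tendstoI)
  fix e :: real assume "e > 0"
  define c where "c = content {a0..u}"
  define \<eta> where "\<eta> = e / ((M + 1) * (c + 1))"
  have "c \<ge> 0" "M \<ge> 0"
    using variation_le_nonneg[OF M] by (simp_all add: c_def)
  then have "\<eta> > 0"
    using \<open>e > 0\<close> unfolding \<eta>_def by (intro divide_pos_pos mult_pos_pos) auto
  have "\<eta> * M * c < e"
    unfolding \<eta>_def by (rule divide_mult_add_one_mult_less[OF \<open>M \<ge> 0\<close> \<open>c \<ge> 0\<close> \<open>e > 0\<close>])
  obtain \<delta> where "\<delta> > 0" and \<delta>: "\<And>x x' y y'. \<bar>(x - y) - (x' - y')\<bar> < \<delta> \<Longrightarrow>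
      \<bar>reflected_primitive F x y - reflected_primitive F x' y'\<bar> \<le> \<eta>"
    using reflected_primitive_modulus[OF F \<open>\<eta> > 0\<close>] by blast
  define J where "J t = hs_integral (reflected_primitive F t) G a b" for t
  have "continuous_on UNIV J"
    unfolding J_def by (rule uniformly_continuous_imp_continuous[OF uniformly_continuous_hs_integral_reflected_primitive[OF F M]])
  then have "continuous_on {a0..u} J"
    by (rule continuous_on_subset) simp
  then have J: "(J has_integral integral {a0..u} J) {a0..u}"
    by (intro integrable_integral integrable_continuous_real)
  have "\<bar>rs_sum (\<lambda>y. integral {a0..u} (\<lambda>t. reflected_primitive F t y)) G p - integral {a0..u} J\<bar> < e"
    if p: "p tagged_division_of {a..b}" "(\<lambda>x. ball x (\<delta>/2)) fine p" for p
  proof -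
    have err: "\<bar>rs_sum (reflected_primitive F t) G p - J t\<bar> \<le> \<eta> * M" for t
      unfolding J_def
      by (rule abs_rs_sum_hs_integral_le[OF hs_has_integral_hs_integral[OF M uniformly_continuous_reflected_primitive[OF F]]
            variation_leD[OF M] p])
         (use \<open>\<delta> > 0\<close> \<open>\<eta> > 0\<close> \<delta> in \<open>auto simp: abs_minus_commute\<close>)
    have "((\<lambda>t. rs_sum (reflected_primitive F t) G p) has_integral
        rs_sum (\<lambda>y. integral {a0..u} (\<lambda>t. reflected_primitive F t y)) G p) {a0..u}"
      using tagged_division_of_finite[OF p(1)]
      by (intro has_integral_rs_sum integrable_integral integrable_continuous_real
          continuous_on_reflected_primitive_fst[OF F])
    then have "((\<lambda>t. rs_sum (reflected_primitive F t) G p - J t) has_integral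
        rs_sum (\<lambda>y. integral {a0..u} (\<lambda>t. reflected_primitive F t y)) G p - integral {a0..u} J) {a0..u}"
      by (rule has_integral_diff[OF _ J])
    then have "\<bar>rs_sum (\<lambda>y. integral {a0..u} (\<lambda>t. reflected_primitive F t y)) G p - integral {a0..u} J\<bar>
        \<le> \<eta> * M * c"
      unfolding c_def using err \<open>\<eta> > 0\<close> \<open>M \<ge> 0\<close> by (intro has_integral_bound_real) auto
    then show ?thesis
      using \<open>\<eta> * M * c < e\<close> by linarith
  qed
  then show "eventually (\<lambda>p. dist (rs_sum (\<lambda>y. integral {a0..u} (\<lambda>t. reflected_primitive F t y)) G p)
      (integral {a0..u} (\<lambda>t. hs_integral (reflected_primitive F t) G a b)) < e) (division_filter {a..b})"
    unfolding eventually_division_filter J_def dist_real_def using \<open>\<delta> > 0\<close>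
    by (intro exI[of _ "\<lambda>x. ball x (\<delta>/2)"]) auto
qed

lemma has_real_derivative_integral_shift:
  fixes f :: "real \<Rightarrow> real"
  assumes f: "continuous_on UNIV f" and "a0 \<le> u"
  shows "((\<lambda>y. integral {a0..u} (\<lambda>t. f (t - y))) has_real_derivative f (a0 - y) - f (u - y)) (at y)"
proof -
  define c1 c2 where "c1 = a0 - y - 1" and "c2 = u - y + 1"
  obtain P where P: "\<And>s. s \<in> {c1..c2} \<Longrightarrow> (P has_vector_derivative f s) (at s within {c1..c2})"
    using antiderivative_continuous[OF continuous_on_subset[OF f subset_UNIV], of c1 c2] by auto
  have P': "(P has_real_derivative f s) (at s)" if "c1 < s" "s < c2" for s
    using P[of s] at_within_Icc_at[OF that] that by (simp add: has_real_derivative_iff_has_vector_derivative)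
  have eq: "integral {a0..u} (\<lambda>t. f (t - y')) = P (u - y') - P (a0 - y')" if "y' \<in> ball y 1" for y'
  proof (rule integral_unique, rule fundamental_theorem_of_calculus[OF \<open>a0 \<le> u\<close>])
    fix t assume "t \<in> {a0..u}"
    then have t: "c1 < t - y'" "t - y' < c2"
      using that by (auto simp: c1_def c2_def dist_real_def)
    have "((\<lambda>t. P (t - y')) has_real_derivative f (t - y') * 1) (at t)"
      by (rule DERIV_chain2[where g="\<lambda>t. t - y'", OF P'[OF t]]) (auto intro!: derivative_eq_intros)
    then show "((\<lambda>t. P (t - y')) has_vector_derivative f (t - y')) (at t within {a0..u})"
      by (simp add: has_real_derivative_iff_has_vector_derivative has_vector_derivative_at_within)
  qed
  have d: "((\<lambda>y. P (u - y) - P (a0 - y)) has_real_derivative f (a0 - y) - f (u - y)) (at y)"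
  proof -
    have y: "c1 < u - y" "u - y < c2" "c1 < a0 - y" "a0 - y < c2"
      using \<open>a0 \<le> u\<close> by (auto simp: c1_def c2_def)
    have "((\<lambda>y. P (u - y)) has_real_derivative f (u - y) * (- 1)) (at y)"
      by (rule DERIV_chain2[where g="\<lambda>y. u - y", OF P'[OF y(1,2)]]) (auto intro!: derivative_eq_intros)
    moreover have "((\<lambda>y. P (a0 - y)) has_real_derivative f (a0 - y) * (- 1)) (at y)"
      by (rule DERIV_chain2[where g="\<lambda>y. a0 - y", OF P'[OF y(3,4)]]) (auto intro!: derivative_eq_intros)
    ultimately show ?thesis
      using DERIV_diff by fastforce
  qed
  show ?thesis
    by (rule has_field_derivative_transform_within_open[OF d open_ball[of y 1]]) (auto simp: eq)
qed

lemma deriv_tendsto_at_top_eq_0: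
  assumes g: "\<And>x. (g has_real_derivative G x) (at x)"
    and lim_g: "(g \<longlongrightarrow> Lg) at_top" and lim_G: "(G \<longlongrightarrow> L) at_top"
  shows "L = 0"
proof -
  have "\<exists>z. x < z \<and> g (x + 1) - g x = G z" for x
    using MVT2[of x "x + 1" g G] g by force
  then obtain z where z: "\<And>x. x < z x" "\<And>x. g (x + 1) - g x = G (z x)"
    by metis
  have "filterlim z at_top at_top"
    by (rule filterlim_at_top_mono[OF filterlim_ident]) (intro always_eventually allI less_imp_le z(1))
  then have "((\<lambda>x. g (x + 1) - g x) \<longlongrightarrow> L) at_top"
    unfolding z(2) by (rule filterlim_compose[OF lim_G])
  moreover have "filterlim (\<lambda>x. x + 1) at_top (at_top :: real filter)"
    by (rule filterlim_at_top_mono[OF filterlim_ident]) auto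
  then have "((\<lambda>x. g (x + 1) - g x) \<longlongrightarrow> Lg - Lg) at_top"
    by (intro tendsto_diff filterlim_compose[OF lim_g] lim_g)
  ultimately have "L = Lg - Lg"
    using tendsto_unique trivial_limit_at_top_linorder by blast
  then show ?thesis
    by simp
qed

lemma deriv_tendsto_at_bot_eq_0:
  assumes g: "\<And>x. (g has_real_derivative G x) (at x)"
    and lim_g: "(g \<longlongrightarrow> Lg) at_bot" and lim_G: "(G \<longlongrightarrow> L) at_bot"
  shows "L = 0"
proof -
  have "((\<lambda>x. g (- x)) has_real_derivative G (- x) * (- 1)) (at x)" for x
    by (rule DERIV_chain2[where g="\<lambda>x. - x", OF g]) (auto intro!: derivative_eq_intros)
  then have "((\<lambda>x. g (- x)) has_real_derivative - G (- x)) (at x)" for x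
    by simp
  moreover have "((\<lambda>x. g (- x)) \<longlongrightarrow> Lg) at_top" "((\<lambda>x. - G (- x)) \<longlongrightarrow> - L) at_top"
    using lim_g lim_G by (auto simp: filterlim_at_bot_mirror intro: tendsto_minus)
  ultimately have "- L = 0"
    by (rule deriv_tendsto_at_top_eq_0)
  then show ?thesis
    by simp
qed

lemma continuous_on_reflected_primitive:
  assumes "B_C F"
  shows "continuous_on S (reflected_primitive F x)"
  using uniformly_continuous_imp_continuous[OF uniformly_continuous_reflected_primitive[OF assms]]
    subset_UNIV by (rule continuous_on_subset)

lemma continuous_on_compose_minus_left:
  fixes f :: "real \<Rightarrow> real"
  assumes "continuous_on UNIV f"
  shows "continuous_on S (\<lambda>y. f (c - y))"
  by (rule continuous_on_compose2[OF assms continuous_on_diff[OF continuous_on_const continuous_on_id] subset_UNIV])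

lemma integral_hs_integral_reflected_primitive_Icc:
  assumes F: "B_C F" and g: "\<And>y. (g has_real_derivative G y) (at y)"
    and MG: "variation_le G MG" and G: "continuous_on UNIV G" and "a0 \<le> u" "a \<le> b"
  defines "\<Phi> \<equiv> \<lambda>y. integral {a0..u} (\<lambda>t. reflected_primitive F t y)"
  shows "integral {a0..u} (\<lambda>t. hs_integral (reflected_primitive F t) G a b)
    = \<Phi> b * G b - \<Phi> a * G a + hs_integral (reflected_primitive F u) g a b - hs_integral (reflected_primitive F a0) g a b"
proof -
  have Fc: "continuous_on UNIV F"
    using F unfolding B_C_def by blast
  have Gab: "continuous_on {a..b} G"
    using G by (rule continuous_on_subset) simp
  have "(\<Phi> has_real_derivative F (u - y) - F (a0 - y)) (at y)" for y
    using has_real_derivative_integral_shift[of "\<lambda>s. lim_top F - F s" a0 u y] Fc \<open>a0 \<le> u\<close>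
    unfolding \<Phi>_def reflected_primitive_def by (simp add: continuous_on_diff)
  moreover have "continuous_on {a..b} (\<lambda>y. F (u - y) - F (a0 - y))"
    by (intro continuous_on_diff continuous_on_compose_minus_left[OF Fc])
  ultimately have "integral {a0..u} (\<lambda>t. hs_integral (reflected_primitive F t) G a b)
      = \<Phi> b * G b - \<Phi> a * G a - integral {a..b} (\<lambda>y. G y * (F (u - y) - F (a0 - y)))"
    unfolding \<Phi>_def
    by (intro hs_has_integral_unique[OF hs_has_integral_integral_reflected_primitive[OF F MG]]
        hs_has_integral_by_parts[OF \<open>a \<le> b\<close> _ _ Gab])
  moreover have "hs_integral (reflected_primitive F x) g a b = integral {a..b} (\<lambda>y. reflected_primitive F x y * G y)" for x
    using g Gab continuous_on_reflected_primitive[OF F]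
    by (intro hs_integral_eqI hs_has_integral_deriv_integrator)
  moreover have "integral {a..b} (\<lambda>y. G y * (F (u - y) - F (a0 - y)))
      = integral {a..b} (\<lambda>y. reflected_primitive F a0 y * G y) - integral {a..b} (\<lambda>y. reflected_primitive F u y * G y)"
    by (subst integral_diff[symmetric])
       (auto intro!: integrable_continuous_real continuous_intros continuous_on_reflected_primitive[OF F] Gab
          continuous_on_compose_minus_left[OF Fc] simp: reflected_primitive_def algebra_simps)
  ultimately show ?thesis
    by simp
qed

lemma deriv_tendsto_0:
  assumes g: "\<And>y. (g has_real_derivative G y) (at y)"
    and Mg: "variation_le g Mg" and MG: "variation_le G MG"
  shows "(G \<longlongrightarrow> 0) at_top" "(G \<longlongrightarrow> 0) at_bot"
proof -
  obtain Lg LG where "(g \<longlongrightarrow> Lg) at_top" "(G \<longlongrightarrow> LG) at_top"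
    using variation_le_tendsto_at_top[OF Mg] variation_le_tendsto_at_top[OF MG] by metis
  then show "(G \<longlongrightarrow> 0) at_top"
    using deriv_tendsto_at_top_eq_0[OF g] by blast
  obtain Lg' LG' where "(g \<longlongrightarrow> Lg') at_bot" "(G \<longlongrightarrow> LG') at_bot"
    using variation_le_tendsto_at_bot[OF Mg] variation_le_tendsto_at_bot[OF MG] by metis
  then show "(G \<longlongrightarrow> 0) at_bot"
    using deriv_tendsto_at_bot_eq_0[OF g] by blast
qed

lemma uniform_limit_hs_integral_reflected_primitive:
  assumes F: "B_C F" and M: "variation_le G M"
  shows "uniform_limit S (\<lambda>(a,b) t. hs_integral (reflected_primitive F t) G a b)
    (\<lambda>t. hs_integral_R (reflected_primitive F t) G) (at_bot \<times>\<^sub>F at_top)"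
  unfolding uniform_limit_iff
proof (intro allI impI)
  fix e :: real assume "e > 0"
  obtain B where B: "\<And>x y. \<bar>reflected_primitive F x y\<bar> \<le> B"
    using reflected_primitive_bounded[OF F] by blast
  then have "B \<ge> 0"
    by (meson abs_ge_zero order_trans)
  define \<epsilon> where "\<epsilon> = e / (4 * (B + 1))"
  have "\<epsilon> > 0"
    using \<open>e > 0\<close> \<open>B \<ge> 0\<close> by (simp add: \<epsilon>_def)
  have "4 * (B * \<epsilon>) = B * (e / (B + 1))"
    using \<open>B \<ge> 0\<close> by (simp add: \<epsilon>_def field_simps)
  then have "4 * (B * \<epsilon>) < e"
    using mult_divide_add_one_less[OF \<open>B \<ge> 0\<close> \<open>e > 0\<close>] by simp
  obtain A where "A > 0" "tail_variation_le G \<epsilon> A"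
    using variation_le_tail[OF M \<open>\<epsilon> > 0\<close>] by blast
  then have bound: "\<bar>hs_integral (reflected_primitive F t) G a b - hs_integral_R (reflected_primitive F t) G\<bar> \<le> 4 * (B * \<epsilon>)"
    if "a \<le> -A" "A \<le> b" for a b t
    using abs_hs_integral_hs_integral_R_le[OF M uniformly_continuous_reflected_primitive[OF F] B] that by auto
  have close: "\<bar>hs_integral (reflected_primitive F t) G a b - hs_integral_R (reflected_primitive F t) G\<bar> < e"
    if "a \<le> -A \<and> A \<le> b" for a b t
    using bound[of a b t] that \<open>4 * (B * \<epsilon>) < e\<close> by simp
  show "eventually (\<lambda>x. \<forall>t\<in>S. dist ((\<lambda>(a,b) t. hs_integral (reflected_primitive F t) G a b) x t)
      (hs_integral_R (reflected_primitive F t) G) < e) (at_bot \<times>\<^sub>F at_top)"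
    by (rule eventually_mono[OF eventually_at_bot_at_top_tails[of A]]) (auto simp: dist_real_def intro!: close)
qed

lemma tendsto_integral_hs_integral_reflected_primitive:
  assumes F: "B_C F" and M: "variation_le G M"
  shows "((\<lambda>(a,b). integral {a0..u} (\<lambda>t. hs_integral (reflected_primitive F t) G a b))
    \<longlongrightarrow> integral {a0..u} (\<lambda>t. hs_integral_R (reflected_primitive F t) G)) (at_bot \<times>\<^sub>F at_top)"
proof -
  obtain I K where I: "\<And>x. ((\<lambda>(a,b) t. hs_integral (reflected_primitive F t) G a b) x has_integral I x) {a0..u}"
    and K: "((\<lambda>t. hs_integral_R (reflected_primitive F t) G) has_integral K) {a0..u}"
    and "(I \<longlongrightarrow> K) (at_bot \<times>\<^sub>F at_top)"
  proof (rule uniform_limit_integral[OF uniform_limit_hs_integral_reflected_primitive[OF F M]])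
    show "continuous_on {a0..u} ((\<lambda>(a,b) t. hs_integral (reflected_primitive F t) G a b) x)" for x
      using continuous_on_subset[OF uniformly_continuous_imp_continuous[OF
          uniformly_continuous_hs_integral_reflected_primitive[OF F M]] subset_UNIV]
      by (simp add: case_prod_unfold)
  qed (auto simp: prod_filter_eq_bot intro: that)
  moreover have "(\<lambda>(a,b). integral {a0..u} (\<lambda>t. hs_integral (reflected_primitive F t) G a b)) = I"
    using I by (auto intro!: integral_unique simp: case_prod_unfold)
  moreover have "K = integral {a0..u} (\<lambda>t. hs_integral_R (reflected_primitive F t) G)"
    using K by (rule integral_unique[symmetric])
  ultimately show ?thesis
    by simp
qed

lemma tendsto_bounded_mult_zero:
  fixes \<Phi> G :: "real \<Rightarrow> real"
  assumes "\<And>y. \<bar>\<Phi> y\<bar> \<le> C" "(G \<longlongrightarrow> 0) L" "filterlim f L F"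
  shows "((\<lambda>x. \<Phi> (f x) * G (f x)) \<longlongrightarrow> 0) F"
proof (rule tendsto_0_le[OF filterlim_compose[OF assms(2,3)], of _ C])
  have "\<bar>\<Phi> (f x) * G (f x)\<bar> \<le> \<bar>G (f x)\<bar> * C" for x
    using mult_right_mono[OF assms(1) abs_ge_zero, of "f x" "G (f x)"] by (simp add: abs_mult mult.commute)
  then show "eventually (\<lambda>x. norm (\<Phi> (f x) * G (f x)) \<le> norm (G (f x)) * C) F"
    by (intro always_eventually allI) simp
qed

lemma integral_hs_integral_R_reflected_primitive:
  assumes F: "B_C F" and g: "\<And>y. (g has_real_derivative G y) (at y)"
    and Mg: "variation_le g Mg" and MG: "variation_le G MG" and G: "continuous_on UNIV G" and "a0 \<le> u"
  shows "integral {a0..u} (\<lambda>t. hs_integral_R (reflected_primitive F t) G)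
    = hs_integral_R (reflected_primitive F u) g - hs_integral_R (reflected_primitive F a0) g"
proof -
  define \<Phi> where "\<Phi> y = integral {a0..u} (\<lambda>t. reflected_primitive F t y)" for y
  define J where "J = (\<lambda>(a,b). integral {a0..u} (\<lambda>t. hs_integral (reflected_primitive F t) G a b))"
  define R where "R = (\<lambda>(a,b). \<Phi> b * G b - \<Phi> a * G a
      + hs_integral (reflected_primitive F u) g a b - hs_integral (reflected_primitive F a0) g a b)"
  obtain B where B: "\<And>x y. \<bar>reflected_primitive F x y\<bar> \<le> B"
    using reflected_primitive_bounded[OF F] by blast
  have Q: "((\<lambda>(a,b). hs_integral (reflected_primitive F x) g a b) \<longlongrightarrow> hs_integral_R (reflected_primitive F x) g)
      (at_bot \<times>\<^sub>F at_top)" for x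
    by (rule tendsto_hs_integral_R[OF Mg uniformly_continuous_reflected_primitive[OF F] B])
  have \<Phi>: "\<bar>\<Phi> y\<bar> \<le> B * (u - a0)" for y
    unfolding \<Phi>_def
    using integral_bound[OF \<open>a0 \<le> u\<close> continuous_on_reflected_primitive_fst[OF F, where y=y], where B=B] B
    by simp
  have R: "(R \<longlongrightarrow> 0 - 0 + hs_integral_R (reflected_primitive F u) g - hs_integral_R (reflected_primitive F a0) g)
      (at_bot \<times>\<^sub>F at_top)"
    using Q[of u] Q[of a0] unfolding R_def case_prod_unfold
    by (intro tendsto_add tendsto_diff tendsto_bounded_mult_zero[OF \<Phi> deriv_tendsto_0(1)[OF g Mg MG] filterlim_snd]
        tendsto_bounded_mult_zero[OF \<Phi> deriv_tendsto_0(2)[OF g Mg MG] filterlim_fst])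
  have JR: "eventually (\<lambda>x. J x = R x) (at_bot \<times>\<^sub>F at_top)"
    using eventually_at_bot_at_top_tails[of 0]
    by eventually_elim
       (auto simp: J_def R_def \<Phi>_def integral_hs_integral_reflected_primitive_Icc[OF F g MG G \<open>a0 \<le> u\<close>])
  have "(J \<longlongrightarrow> integral {a0..u} (\<lambda>t. hs_integral_R (reflected_primitive F t) G)) (at_bot \<times>\<^sub>F at_top)"
    unfolding J_def by (rule tendsto_integral_hs_integral_reflected_primitive[OF F MG])
  from Lim_transform_eventually[OF this JR] R
  show ?thesis
    by (intro tendsto_unique[of "at_bot \<times>\<^sub>F at_top"]) (simp_all add: prod_filter_eq_bot)
qed

lemma has_real_derivative_conv:
  assumes F: "B_C F" and g: "\<And>y. (g has_real_derivative G y) (at y)"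
    and Mg: "variation_le g Mg" and MG: "variation_le G MG" and G: "continuous_on UNIV G"
  shows "(conv F g has_real_derivative conv F G x) (at x)"
proof -
  define W where "W t = hs_integral_R (reflected_primitive F t) G" for t
  have "continuous_on {x - 1..x + 1} W"
    using uniformly_continuous_imp_continuous[OF uniformly_continuous_hs_integral_R_reflected_primitive[OF F MG]]
    unfolding W_def by (rule continuous_on_subset) simp
  then have "((\<lambda>y. integral {x - 1..y} W) has_real_derivative W x) (at x)"
    using integral_has_real_derivative[of "x - 1" "x + 1" W x] at_within_Icc_at[of "x - 1" x "x + 1"] by simp
  then have d: "((\<lambda>y. lim_top F * lim_top g - hs_integral_R (reflected_primitive F (x - 1)) g - integral {x - 1..y} W)
      has_real_derivative - W x) (at x)"
    by (auto intro!: derivative_eq_intros)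
  have "lim_top G = 0"
    unfolding lim_top_def by (rule tendsto_Lim[OF _ deriv_tendsto_0(1)[OF g Mg MG]]) simp
  then have W: "- W x = conv F G x"
    by (simp add: conv_eq W_def)
  have eq: "lim_top F * lim_top g - hs_integral_R (reflected_primitive F (x - 1)) g - integral {x - 1..y} W
      = conv F g y" if "y \<in> {x - 1<..}" for y
    using that integral_hs_integral_R_reflected_primitive[OF F g Mg MG G, of "x - 1" y]
    by (simp add: conv_eq W_def[abs_def])
  show ?thesis
    by (rule has_field_derivative_transform_within_open[OF d[unfolded W] open_greaterThan[of "x - 1"]]) (simp_all add: eq)
qed

lemma AC_bar_has_real_derivative_conv:
  assumes "B_C F" "\<And>x. g differentiable (at x)" "AC_bar g" "AC_bar (deriv g)"
  shows "(conv F g has_real_derivative conv F (deriv g) x) (at x)"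
proof -
  obtain Mg MG where "variation_le g Mg" "variation_le (deriv g) MG"
    using AC_bar_variation_le assms(3,4) by metis
  then show ?thesis
    using assms(2) AC_bar_continuous_on[OF assms(4)]
    by (intro has_real_derivative_conv[OF assms(1)]) (auto simp: DERIV_deriv_iff_real_differentiable)
qed

theorem theorem4:
  fixes F g :: "real \<Rightarrow> real" and n :: nat
  assumes "B_C F"
    and "\<forall>k<n. \<forall>x. (deriv ^^ k) g differentiable (at x)"
    and "\<forall>k\<le>n. AC_bar ((deriv ^^ k) g)"
  shows "(\<forall>k<n. \<forall>x. (deriv ^^ k) (conv F g) differentiable (at x))
       \<and> continuous_on UNIV ((deriv ^^ n) (conv F g))
       \<and> (\<forall>x. (deriv ^^ n) (conv F g) x = conv F ((deriv ^^ n) g) x)"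
  using assms(2,3)
proof (induction n arbitrary: g)
  case 0
  then have "AC_bar g"
    by simp
  then obtain M where "variation_le g M"
    by (rule AC_bar_variation_le)
  then show ?case
    using continuous_on_conv[OF assms(1)] by simp
next
  case (Suc n)
  have shift: "(deriv ^^ Suc k) h = (deriv ^^ k) (deriv h)" for k and h :: "real \<Rightarrow> real"
    by (simp add: funpow_Suc_right del: funpow.simps)
  have d: "(conv F g has_real_derivative conv F (deriv g) x) (at x)" for x
    using Suc.prems by (intro AC_bar_has_real_derivative_conv[OF assms(1)]) (auto dest: spec[of _ 0] spec[of _ 1])
  then have "deriv (conv F g) = conv F (deriv g)"
    by (intro ext DERIV_imp_deriv)
  then have conv_shift: "(deriv ^^ Suc k) (conv F g) = (deriv ^^ k) (conv F (deriv g))" for k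
    by (simp only: shift)
  have IH: "(\<forall>k<n. \<forall>x. (deriv ^^ k) (conv F (deriv g)) differentiable (at x))
      \<and> continuous_on UNIV ((deriv ^^ n) (conv F (deriv g)))
      \<and> (\<forall>x. (deriv ^^ n) (conv F (deriv g)) x = conv F ((deriv ^^ n) (deriv g)) x)"
    using Suc.prems by (intro Suc.IH) (auto simp flip: shift)
  have "(deriv ^^ k) (conv F g) differentiable (at x)" if "k < Suc n" for k x
    using that d IH conv_shift real_differentiable_def by (cases k) auto
  then show ?case
    unfolding conv_shift shift[of n g] using IH by blast
qed

end
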